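(* Let $n\ge2$, $s\ge n$ integers, $\Omega>0$, $0<\sigma<m_{\min}$, and let $\mu=\sum_{j=1}^n a_j\delta_{y_j}$ with pairwise distinct $y_j\in\big[-\frac{(n-1)\pi}{2\Omega},\frac{(n-1)\pi}{2\Omega}\big]$ and $\min_j|a_j|=m_{\min}$. For $t=1,\dots,2s+1$ let $z_t=-\Omega+\frac{t-1}{s}\Omega$ and $\mathbf Y(z_t)=\sum_{j=1}^n a_je^{iy_jz_t}+\mathbf W(z_t)$ with $|\mathbf W(z_t)|\le\sigma$. Let $\mathbf H(s)$ be the $(s+1)\times(s+1)$ Hankel matrix with entries $\mathbf H(s)_{p,q}=\mathbf Y(z_{p+q-1})$, $1\le p,q\le s+1$, and let $\hat\sigma_1\ge\dots\ge\hat\sigma_{s+1}$ be its singular values. Then $\hat\sigma_j\le(s+1)\sigma$ for $j=n+1,\dots,s+1$. Moreover, if $$\min_{p\ne j}|y_p-y_j|>\frac{\pi s}{\Omega}\Big(\frac{2n(s+1)}{\zeta(n)^2}\frac{\sigma}{m_{\min}}\Big)^{\frac{1}{2n-2}},$$ then $\hat\sigma_n>(s+1)\sigma$.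
   Context: For an integer $k\ge1$: $\zeta(k)=\big((\tfrac{k-1}{2})!\big)^2$ if $k$ is odd, $\zeta(k)=(\tfrac{k}{2})!(\tfrac{k-2}{2})!$ if $k$ is even. *)

theory Defs
  imports "Jordan_Normal_Form.Schur_Decomposition" "HOL-Computational_Algebra.Polynomial"
begin

definition zeta_fn :: "nat \<Rightarrow> real" where
  "zeta_fn k = (if odd k then (fact ((k - 1) div 2))^2
                else fact (k div 2) * fact ((k - 2) div 2))"

definition singular_values :: "complex mat \<Rightarrow> real list" where
  "singular_values A =
     rev (sorted_list_of_multiset
       (image_mset (\<lambda>e. sqrt (Re e)) (proots (char_poly (mat_adjoint A * A)))))"

definition sing_val :: "complex mat \<Rightarrow> nat \<Rightarrow> real" where
  "sing_val A k = singular_values A ! (k - 1)"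

end

theory Submission
  imports Defs
begin

text \<open>Sampling at the equispaced points \<open>z t\<close> writes the Hankel matrix as
  \<open>H = V\<^sup>T diag b V + E\<close>, where \<open>V = (x j ^ q)\<close> is the \<open>n \<times> (s + 1)\<close> Vandermonde matrix of the
  unimodular nodes \<open>x j = cis (y j * \<Omega> / s)\<close>, \<open>|b j| = |a j|\<close>, and \<open>E\<close> is the Hankel matrix of the noise,
  whose operator norm is at most \<open>(s + 1) \<sigma>\<close>. On the kernel of \<open>V\<close>, of codimension at most \<open>n\<close>,
  \<open>H\<close> acts as \<open>E\<close>, so by Courant--Fischer all singular values beyond the \<open>n\<close>-th are at most
  \<open>(s + 1) \<sigma>\<close>. For the \<open>n\<close>-th one needs \<open>V\<close> to be well conditioned: a coefficient \<open>c j\<close> of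
  \<open>\<Sum>\<^sub>j c j * x j ^ k\<close> is isolated by the polynomial vanishing at the other nodes, and nodes at
  angular distance at least \<open>\<delta>\<close> satisfy \<open>\<Prod>\<^sub>i\<^sub>\<noteq>\<^sub>j |x j - x i| \<ge> (2 \<delta> / \<pi>) ^ (n - 1) * \<zeta> n\<close>.
  The separation hypothesis is exactly what makes the resulting lower bound \<open>m_min / K\<close> on the
  signal exceed twice the noise level.\<close>

section \<open>Chords of the unit circle\<close>

lemma two_div_pi_mult_le_sin:
  fixes x :: real
  assumes "0 \<le> x" "x \<le> pi / 2"
  shows "2 / pi * x \<le> sin x"
proof (rule ccontr)
  assume contra: "\<not> ?thesis"
  define g where "g = (\<lambda>t::real. sin t - 2 / pi * t)"
  have neg: "g x < 0" using contra unfolding g_def by simp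
  have g0: "g 0 = 0" and g1: "g (pi / 2) = 0" unfolding g_def by auto
  have deriv: "\<And>t. DERIV g t :> cos t - 2 / pi" unfolding g_def
    by (auto intro!: derivative_eq_intros)
  have "g x \<noteq> g 0" "g x \<noteq> g (pi / 2)" using neg g0 g1 by simp_all
  hence "x \<noteq> 0" "x \<noteq> pi / 2" by blast+
  hence x0: "0 < x" and x1: "x < pi / 2" using assms by auto
  obtain a where a: "0 < a" "a < x" "g x - g 0 = (x - 0) * (cos a - 2 / pi)"
    using MVT2[OF x0 deriv] by blast
  obtain b where b: "x < b" "b < pi / 2" "g (pi / 2) - g x = (pi / 2 - x) * (cos b - 2 / pi)"
    using MVT2[OF x1 deriv] by blast
  have "cos a < 2 / pi" using a neg g0 x0 by (auto simp: mult_less_0_iff)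
  moreover have "(pi / 2 - x) * (cos b - 2 / pi) > 0" using b(3) neg g1 by linarith
  hence "cos b > 2 / pi" using x1 by (simp add: zero_less_mult_iff)
  moreover have "cos b \<le> cos a" using a b x0 by (intro cos_monotone_0_pi_le) auto
  ultimately show False by simp
qed

lemma norm_cis_diff: "cmod (cis a - cis b) = 2 * \<bar>sin ((a - b) / 2)\<bar>"
proof -
  have "(cmod (cis a - cis b))\<^sup>2 = (cos a - cos b)\<^sup>2 + (sin a - sin b)\<^sup>2"
    by (simp add: cmod_power2)
  also have "\<dots> = 2 - 2 * cos (a - b)"
    by (simp add: cos_diff power2_diff algebra_simps)
  also have "a - b = 2 * ((a - b) / 2)" by simp
  also have "cos \<dots> = 1 - 2 * (sin ((a - b) / 2))\<^sup>2" by (rule cos_double_sin)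
  finally have "(cmod (cis a - cis b))\<^sup>2 = (2 * \<bar>sin ((a - b) / 2)\<bar>)\<^sup>2"
    by (simp add: power_mult_distrib)
  thus ?thesis by (rule power2_eq_imp_eq) auto
qed

lemma norm_cis_diff_ge:
  assumes "\<bar>a - b\<bar> \<le> pi"
  shows "2 / pi * \<bar>a - b\<bar> \<le> cmod (cis a - cis b)"
proof -
  have "\<bar>sin ((a - b) / 2)\<bar> = \<bar>sin (\<bar>a - b\<bar> / 2)\<bar>"
    using sin_minus[of "(a - b) / 2"] by (cases "a \<le> b") (simp_all add: minus_divide_left)
  also have "\<dots> = sin (\<bar>a - b\<bar> / 2)"
    using assms by (intro abs_of_nonneg sin_ge_zero) auto
  moreover have "2 / pi * (\<bar>a - b\<bar> / 2) \<le> sin (\<bar>a - b\<bar> / 2)"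
    using assms by (intro two_div_pi_mult_le_sin) auto
  ultimately show ?thesis by (simp add: norm_cis_diff)
qed

section \<open>Products of distances between separated points\<close>

lemma fact_mult_balanced_le:
  assumes "a \<le> b"
  shows "(fact ((a + b) div 2) * fact ((a + b + 1) div 2) :: real) \<le> fact a * fact b"
  using assms
proof (induction "b - a" arbitrary: a b rule: less_induct)
  case less
  show ?case
  proof (cases "b \<le> a + 1")
    case True
    hence "(a + b) div 2 = a" "(a + b + 1) div 2 = b" using less.prems by presburger+
    thus ?thesis by simp
  next
    case False
    have "(fact ((a + b) div 2) * fact ((a + b + 1) div 2) :: real) \<le> fact (a + 1) * fact (b - 1)"
      using less.hyps[of "b - 1" "a + 1"] False by simp
    also have "(fact (a + 1) :: real) * fact (b - 1) = (real a + 1) * fact a * fact (b - 1)"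
      by simp
    also have "\<dots> \<le> real b * fact a * fact (b - 1)"
      using False by (intro mult_right_mono) auto
    also have "\<dots> = fact a * fact b"
      using False by (simp add: fact_reduce[of b])
    finally show ?thesis .
  qed
qed

lemma zeta_fn_le_fact_mult:
  assumes "a + b + 1 = n"
  shows "zeta_fn n \<le> fact a * fact b"
proof -
  have "zeta_fn n = fact ((a + b) div 2) * fact ((a + b + 1) div 2)"
  proof (cases "odd n")
    case True
    hence "(a + b) div 2 = (n - 1) div 2" "(a + b + 1) div 2 = (n - 1) div 2"
      using assms by presburger+
    thus ?thesis using True by (simp add: zeta_fn_def power2_eq_square)
  next
    case False
    hence "(a + b) div 2 = (n - 2) div 2" "(a + b + 1) div 2 = n div 2"
      using assms by presburger+
    thus ?thesis using False by (simp add: zeta_fn_def mult.commute)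
  qed
  thus ?thesis
    using fact_mult_balanced_le[of a b] fact_mult_balanced_le[of b a]
    by (cases "a \<le> b") (auto simp: add_ac mult.commute)
qed

lemma zeta_fn_pos: "zeta_fn n > 0"
  unfolding zeta_fn_def by auto

lemma Max_ge_of_separated:
  fixes f :: "'a \<Rightarrow> real"
  assumes "finite S" "S \<noteq> {}"
    and lo: "\<And>i. i \<in> S \<Longrightarrow> t + d \<le> f i"
    and gap: "\<And>i k. i \<in> S \<Longrightarrow> k \<in> S \<Longrightarrow> i \<noteq> k \<Longrightarrow> d \<le> \<bar>f i - f k\<bar>"
  shows "t + real (card S) * d \<le> Max (f ` S)"
  using assms(1,2) lo gap
proof (induction "card S" arbitrary: S)
  case 0
  thus ?case by simp
next
  case (Suc k)
  have "Max (f ` S) \<in> f ` S" using Suc.prems(1,2) by (intro Max_in) auto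
  then obtain i0 where i0: "i0 \<in> S" "f i0 = Max (f ` S)" by (metis imageE)
  show ?case
  proof (cases "S - {i0} = {}")
    case True
    hence "S = {i0}" using i0(1) by auto
    thus ?thesis using Suc.prems(3) by simp
  next
    case False
    have "Max (f ` (S - {i0})) \<in> f ` (S - {i0})" using False Suc.prems(1) by (intro Max_in) auto
    then obtain i1 where i1: "i1 \<in> S - {i0}" "f i1 = Max (f ` (S - {i0}))" by (metis imageE)
    have card: "card (S - {i0}) = k" using Suc.hyps(2) Suc.prems(1) i0(1) by simp
    have "t + real (card (S - {i0})) * d \<le> f i1"
      unfolding i1(2) by (rule Suc.hyps(1)) (use card Suc.prems False in auto)
    moreover have "f i1 \<le> f i0" unfolding i0(2) using i1(1) Suc.prems(1) by auto
    with Suc.prems(4)[of i0 i1] have "d \<le> f i0 - f i1" using i0(1) i1(1) by auto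
    ultimately show ?thesis using i0(2) Suc.hyps(2)[symmetric] card by (simp add: algebra_simps)
  qed
qed

lemma fact_mult_power_le_prod_of_separated:
  fixes f :: "'a \<Rightarrow> real"
  assumes "finite S" "0 \<le> d"
    and lo: "\<And>i. i \<in> S \<Longrightarrow> t + d \<le> f i"
    and gap: "\<And>i k. i \<in> S \<Longrightarrow> k \<in> S \<Longrightarrow> i \<noteq> k \<Longrightarrow> d \<le> \<bar>f i - f k\<bar>"
  shows "d ^ card S * fact (card S) \<le> (\<Prod>i\<in>S. f i - t)"
  using assms(1) lo gap
proof (induction "card S" arbitrary: S)
  case 0
  thus ?case by simp
next
  case (Suc k)
  hence S: "finite S" "S \<noteq> {}" by auto
  have "Max (f ` S) \<in> f ` S" using S by (intro Max_in) auto
  then obtain i0 where i0: "i0 \<in> S" "f i0 = Max (f ` S)" by (metis imageE)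
  have "t + real (card S) * d \<le> Max (f ` S)"
    by (rule Max_ge_of_separated) (use S Suc.prems in auto)
  hence top: "real (Suc k) * d \<le> f i0 - t"
    unfolding i0(2) Suc.hyps(2) by linarith
  moreover have "d ^ k * fact k \<le> (\<Prod>i\<in>S - {i0}. f i - t)"
  proof -
    have card: "card (S - {i0}) = k" using Suc.hyps(2) S(1) i0(1) by simp
    have "d ^ card (S - {i0}) * fact (card (S - {i0})) \<le> (\<Prod>i\<in>S - {i0}. f i - t)"
      by (rule Suc.hyps(1)) (use card Suc.prems in auto)
    thus ?thesis unfolding card .
  qed
  ultimately have "(real (Suc k) * d) * (d ^ k * fact k) \<le> (f i0 - t) * (\<Prod>i\<in>S - {i0}. f i - t)"
  proof (rule mult_mono)
    show "0 \<le> f i0 - t" using top \<open>0 \<le> d\<close> by (smt (verit) of_nat_0_le_iff zero_le_mult_iff)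
  qed (use \<open>0 \<le> d\<close> in auto)
  thus ?case
    using Suc.hyps(2)[symmetric] prod.remove[OF S(1) i0(1), of "\<lambda>i. f i - t"]
    by (simp add: algebra_simps)
qed

text \<open>Split the other nodes into those left and right of \<open>th j\<close>; each side contributes a factorial,
  and \<open>zeta_fn\<close> is the smallest such product of two factorials.\<close>
lemma zeta_fn_mult_power_le_prod_dist:
  fixes th :: "'a \<Rightarrow> real"
  assumes I: "finite I" "j \<in> I" and "0 \<le> \<delta>"
    and gap: "\<And>i k. i \<in> I \<Longrightarrow> k \<in> I \<Longrightarrow> i \<noteq> k \<Longrightarrow> \<delta> \<le> \<bar>th i - th k\<bar>"
  shows "\<delta> ^ (card I - 1) * zeta_fn (card I) \<le> (\<Prod>i\<in>I - {j}. \<bar>th j - th i\<bar>)"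
proof -
  define L where "L = {i\<in>I - {j}. th i < th j}"
  define R where "R = {i\<in>I - {j}. th i \<ge> th j}"
  have LR: "I - {j} = L \<union> R" "L \<inter> R = {}" "finite L" "finite R"
    unfolding L_def R_def using I(1) by auto
  have card_LR: "card L + card R + 1 = card I"
  proof -
    have "card I > 0" using I by (auto simp: card_gt_0_iff)
    moreover have "card L + card R = card I - 1"
      using card_Un_disjoint[OF LR(3,4,2)] LR(1) card_Diff_singleton[OF I(2)] by simp
    ultimately show ?thesis by simp
  qed
  have jgap: "\<delta> \<le> \<bar>th j - th i\<bar>" if "i \<in> I - {j}" for i
    using gap[of j i] that I(2) by auto
  have "\<delta> ^ card L * fact (card L) \<le> (\<Prod>i\<in>L. (- th i) - (- th j))"
  proof (rule fact_mult_power_le_prod_of_separated[OF LR(3) \<open>0 \<le> \<delta>\<close>])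
    fix i assume "i \<in> L"
    thus "- th j + \<delta> \<le> - th i" using jgap[of i] by (simp add: L_def)
  qed (use gap in \<open>auto simp: L_def\<close>)
  moreover have "\<delta> ^ card R * fact (card R) \<le> (\<Prod>i\<in>R. th i - th j)"
  proof (rule fact_mult_power_le_prod_of_separated[OF LR(4) \<open>0 \<le> \<delta>\<close>])
    fix i assume "i \<in> R"
    thus "th j + \<delta> \<le> th i" using jgap[of i] by (simp add: R_def)
  qed (use gap in \<open>auto simp: R_def\<close>)
  ultimately have "(\<delta> ^ card L * fact (card L)) * (\<delta> ^ card R * fact (card R))
      \<le> (\<Prod>i\<in>L. (- th i) - (- th j)) * (\<Prod>i\<in>R. th i - th j)"
    using \<open>0 \<le> \<delta>\<close> by (intro mult_mono) (auto intro!: prod_nonneg simp: L_def)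
  also have "(\<Prod>i\<in>L. (- th i) - (- th j)) = (\<Prod>i\<in>L. \<bar>th j - th i\<bar>)"
    by (rule prod.cong) (auto simp: L_def)
  also have "(\<Prod>i\<in>R. th i - th j) = (\<Prod>i\<in>R. \<bar>th j - th i\<bar>)"
    by (rule prod.cong) (auto simp: R_def)
  also have "(\<Prod>i\<in>L. \<bar>th j - th i\<bar>) * (\<Prod>i\<in>R. \<bar>th j - th i\<bar>) = (\<Prod>i\<in>I - {j}. \<bar>th j - th i\<bar>)"
    unfolding LR(1) by (rule prod.union_disjoint[OF LR(3,4,2), symmetric])
  also have "(\<delta> ^ card L * fact (card L)) * (\<delta> ^ card R * fact (card R))
      = \<delta> ^ (card I - 1) * (fact (card L) * fact (card R))"
    using card_LR[symmetric] by (simp add: power_add mult_ac)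
  finally have "\<delta> ^ (card I - 1) * (fact (card L) * fact (card R)) \<le> (\<Prod>i\<in>I - {j}. \<bar>th j - th i\<bar>)" .
  moreover have "\<delta> ^ (card I - 1) * zeta_fn (card I) \<le> \<delta> ^ (card I - 1) * (fact (card L) * fact (card R))"
    using zeta_fn_le_fact_mult[OF card_LR] \<open>0 \<le> \<delta>\<close> by (intro mult_left_mono) auto
  ultimately show ?thesis by linarith
qed

section \<open>Vandermonde matrices with separated unimodular nodes\<close>

lemma sum_norm_coeff_prod_linear_le:
  fixes x :: "'a \<Rightarrow> complex"
  assumes "finite S"
  shows "(\<Sum>k\<le>card S. cmod (coeff (\<Prod>i\<in>S. [:- x i, 1:]) k)) \<le> (\<Prod>i\<in>S. 1 + cmod (x i))"
  using assms
proof (induction S rule: finite_induct)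
  case empty
  thus ?case by simp
next
  case (insert a F)
  define P where "P = (\<Prod>i\<in>F. [:- x i, 1:])"
  define d where "d = card F"
  have "degree P = d"
    unfolding P_def d_def by (subst degree_prod_sum_eq) auto
  hence coeff_P: "coeff P (Suc d) = 0" by (simp add: coeff_eq_0)
  have "(\<Sum>k\<le>Suc d. cmod (coeff (pCons 0 P - smult (x a) P) k))
      \<le> (\<Sum>k\<le>Suc d. cmod (coeff (pCons 0 P) k) + cmod (x a) * cmod (coeff P k))"
    by (intro sum_mono) (auto intro: order_trans[OF norm_triangle_ineq4] simp: norm_mult)
  also have "\<dots> = (\<Sum>k\<le>Suc d. cmod (coeff (pCons 0 P) k)) + cmod (x a) * (\<Sum>k\<le>Suc d. cmod (coeff P k))"
    by (simp only: sum.distrib sum_distrib_left)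
  also have "\<dots> = (1 + cmod (x a)) * (\<Sum>k\<le>d. cmod (coeff P k))"
    unfolding sum.atMost_Suc_shift[of "\<lambda>k. cmod (coeff (pCons 0 P) k)"]
    by (simp add: coeff_P algebra_simps)
  also have "\<dots> \<le> (1 + cmod (x a)) * (\<Prod>i\<in>F. 1 + cmod (x i))"
    using insert.IH unfolding P_def d_def by (intro mult_left_mono) auto
  finally show ?case
    using insert.hyps unfolding P_def d_def by (simp add: mult_pCons_left)
qed

text \<open>Pair the moments with the coefficients of the polynomial vanishing at all nodes but \<open>x j\<close>:
  this isolates \<open>c j\<close>, and unimodular nodes keep those coefficients below \<open>2 ^ (n - 1)\<close>.\<close>
lemma norm_mult_prod_dist_le_moments:
  fixes x c :: "nat \<Rightarrow> complex"
  assumes "j < n" "n \<le> N" and unit: "\<And>i. i < n \<Longrightarrow> cmod (x i) = 1"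
  shows "cmod (c j) * (\<Prod>i\<in>{..<n} - {j}. cmod (x j - x i))
    \<le> 2 ^ (n - 1) * sqrt (\<Sum>k<N. (cmod (\<Sum>i<n. c i * x i ^ k))\<^sup>2)"
proof -
  define w where "w = (\<lambda>k. \<Sum>i<n. c i * x i ^ k)"
  define M where "M = sqrt (\<Sum>k<N. (cmod (w k))\<^sup>2)"
  define S where "S = {..<n} - {j}"
  define P where "P = (\<Prod>i\<in>S. [:- x i, 1:])"
  have S: "finite S" "card S = n - 1" unfolding S_def using \<open>j < n\<close> by auto
  have degP: "degree P = n - 1"
    unfolding P_def using S by (subst degree_prod_sum_eq) auto
  have "(\<Sum>k\<le>n - 1. cmod (coeff P k)) \<le> (\<Prod>i\<in>S. 1 + cmod (x i))"
    using sum_norm_coeff_prod_linear_le[OF S(1), of x] unfolding P_def S(2) .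
  also have "\<dots> = 2 ^ (n - 1)" using S unit by (simp add: S_def)
  finally have coeffs: "(\<Sum>k\<le>n - 1. cmod (coeff P k)) \<le> 2 ^ (n - 1)" .
  have wM: "cmod (w k) \<le> M" if "k < N" for k
    unfolding M_def using that by (intro real_le_rsqrt member_le_sum) auto
  have "(\<Sum>k\<le>n - 1. coeff P k * w k) = (\<Sum>k\<le>n - 1. \<Sum>i<n. c i * (coeff P k * x i ^ k))"
    unfolding w_def by (simp add: sum_distrib_left mult_ac)
  also have "\<dots> = (\<Sum>i<n. c i * poly P (x i))"
    by (subst sum.swap) (simp add: poly_altdef degP sum_distrib_left)
  also have "\<dots> = c j * poly P (x j) + (\<Sum>i\<in>S. c i * poly P (x i))"
    unfolding S_def using \<open>j < n\<close> by (subst sum.remove[of _ j]) auto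
  also have "(\<Sum>i\<in>S. c i * poly P (x i)) = 0"
    using S(1) by (auto simp: P_def poly_prod intro!: sum.neutral prod_zero)
  finally have ident: "(\<Sum>k\<le>n - 1. coeff P k * w k) = c j * poly P (x j)" by simp
  have "cmod (c j) * (\<Prod>i\<in>S. cmod (x j - x i)) = cmod (\<Sum>k\<le>n - 1. coeff P k * w k)"
    unfolding ident by (simp add: P_def poly_prod norm_mult prod_norm)
  also have "\<dots> \<le> (\<Sum>k\<le>n - 1. cmod (coeff P k) * M)"
    using \<open>j < n\<close> \<open>n \<le> N\<close>
    by (intro order_trans[OF norm_sum] sum_mono) (auto simp: norm_mult intro!: mult_left_mono wM)
  also have "\<dots> \<le> 2 ^ (n - 1) * M"
    using coeffs unfolding sum_distrib_right[symmetric] M_def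
    by (intro mult_right_mono) (auto intro: sum_nonneg)
  finally show ?thesis unfolding S_def M_def w_def .
qed

lemma norm_coeff_le_moments_of_separated:
  fixes th :: "nat \<Rightarrow> real" and c :: "nat \<Rightarrow> complex"
  assumes "j < n" "n \<le> N" "\<delta> > 0"
    and gap: "\<And>i k. i < n \<Longrightarrow> k < n \<Longrightarrow> i \<noteq> k \<Longrightarrow> \<delta> \<le> \<bar>th i - th k\<bar>"
    and spread: "\<And>i k. i < n \<Longrightarrow> k < n \<Longrightarrow> \<bar>th i - th k\<bar> \<le> pi"
  shows "cmod (c j) \<le> (pi / \<delta>) ^ (n - 1) / zeta_fn n
    * sqrt (\<Sum>k<N. (cmod (\<Sum>i<n. c i * cis (th i) ^ k))\<^sup>2)"
proof -
  define S where "S = {..<n} - {j}"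
  define M where "M = sqrt (\<Sum>k<N. (cmod (\<Sum>i<n. c i * cis (th i) ^ k))\<^sup>2)"
  define Z where "Z = (2 / pi) ^ (n - 1) * (\<delta> ^ (n - 1) * zeta_fn n)"
  have Z: "Z > 0" unfolding Z_def using \<open>\<delta> > 0\<close> zeta_fn_pos[of n] by auto
  have card_S: "card S = n - 1" unfolding S_def using \<open>j < n\<close> by simp
  have "Z \<le> (2 / pi) ^ (n - 1) * (\<Prod>i\<in>S. \<bar>th j - th i\<bar>)"
    unfolding Z_def S_def
    using zeta_fn_mult_power_le_prod_dist[of "{..<n}" j \<delta> th] \<open>j < n\<close> \<open>\<delta> > 0\<close> gap
    by (intro mult_left_mono) auto
  also have "\<dots> = (\<Prod>i\<in>S. 2 / pi * \<bar>th j - th i\<bar>)"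
    by (simp only: prod.distrib prod_constant card_S)
  also have "\<dots> \<le> (\<Prod>i\<in>S. cmod (cis (th j) - cis (th i)))"
    using \<open>j < n\<close> by (intro prod_mono conjI norm_cis_diff_ge spread) (auto simp: S_def)
  finally have "cmod (c j) * Z \<le> cmod (c j) * (\<Prod>i\<in>S. cmod (cis (th j) - cis (th i)))"
    by (intro mult_left_mono) auto
  also have "\<dots> \<le> 2 ^ (n - 1) * M"
    unfolding S_def M_def using \<open>j < n\<close> \<open>n \<le> N\<close> by (intro norm_mult_prod_dist_le_moments) auto
  finally have "cmod (c j) \<le> 2 ^ (n - 1) * M / Z"
    using Z by (simp add: field_simps)
  also have "2 ^ (n - 1) * M / Z = (pi / \<delta>) ^ (n - 1) / zeta_fn n * M"
    unfolding Z_def using \<open>\<delta> > 0\<close> zeta_fn_pos[of n] by (simp add: power_divide field_simps)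
  finally show ?thesis unfolding M_def .
qed

lemma vandermonde_inverse_bound:
  fixes th :: "nat \<Rightarrow> real" and c :: "nat \<Rightarrow> complex"
  assumes "n \<le> N" "\<delta> > 0"
    and gap: "\<And>i k. i < n \<Longrightarrow> k < n \<Longrightarrow> i \<noteq> k \<Longrightarrow> \<delta> \<le> \<bar>th i - th k\<bar>"
    and spread: "\<And>i k. i < n \<Longrightarrow> k < n \<Longrightarrow> \<bar>th i - th k\<bar> \<le> pi"
  shows "(\<Sum>j<n. (cmod (c j))\<^sup>2) \<le> real n * ((pi / \<delta>) ^ (n - 1) / zeta_fn n)\<^sup>2
           * (\<Sum>k<N. (cmod (\<Sum>i<n. c i * cis (th i) ^ k))\<^sup>2)"
proof -
  define K where "K = (pi / \<delta>) ^ (n - 1) / zeta_fn n"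
  define M where "M = sqrt (\<Sum>k<N. (cmod (\<Sum>i<n. c i * cis (th i) ^ k))\<^sup>2)"
  have "(\<Sum>j<n. (cmod (c j))\<^sup>2) \<le> (\<Sum>j<n. (K * M)\<^sup>2)"
    unfolding K_def M_def using assms
    by (intro sum_mono power_mono norm_coeff_le_moments_of_separated) auto
  also have "\<dots> = real n * K\<^sup>2 * M\<^sup>2" by (simp add: power_mult_distrib)
  also have "M\<^sup>2 = (\<Sum>k<N. (cmod (\<Sum>i<n. c i * cis (th i) ^ k))\<^sup>2)"
    unfolding M_def by (simp add: sum_nonneg)
  finally show ?thesis unfolding K_def .
qed

section \<open>Hermitian matrices\<close>

text \<open>Vectors of length \<open>N\<close> are functions \<open>nat \<Rightarrow> complex\<close> read on \<open>{..<N}\<close>; this keeps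
  the linear algebra at the level of finite sums, which is where the estimates live.\<close>

definition cinner :: "nat \<Rightarrow> (nat \<Rightarrow> complex) \<Rightarrow> (nat \<Rightarrow> complex) \<Rightarrow> complex" where
  "cinner N v w = (\<Sum>p<N. v p * cnj (w p))"

definition mat_apply :: "complex mat \<Rightarrow> nat \<Rightarrow> (nat \<Rightarrow> complex) \<Rightarrow> nat \<Rightarrow> complex" where
  "mat_apply B N v = (\<lambda>p. \<Sum>q<N. B $$ (p, q) * v q)"

definition hermitian_mat :: "complex mat \<Rightarrow> nat \<Rightarrow> bool" where
  "hermitian_mat B N \<longleftrightarrow> (\<forall>p<N. \<forall>q<N. B $$ (p, q) = cnj (B $$ (q, p)))"

definition orthonormal :: "nat \<Rightarrow> nat \<Rightarrow> (nat \<Rightarrow> nat \<Rightarrow> complex) \<Rightarrow> bool" where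
  "orthonormal N k u \<longleftrightarrow> (\<forall>i<k. \<forall>l<k. cinner N (u i) (u l) = (if i = l then 1 else 0))"

definition eigenpairs :: "complex mat \<Rightarrow> nat \<Rightarrow> nat \<Rightarrow> (nat \<Rightarrow> nat \<Rightarrow> complex) \<Rightarrow> (nat \<Rightarrow> real) \<Rightarrow> bool" where
  "eigenpairs B N k u d \<longleftrightarrow> (\<forall>i<k. \<forall>p<N. mat_apply B N (u i) p = of_real (d i) * u i p)"

lemma cinner_self: "cinner N v v = of_real (\<Sum>p<N. (cmod (v p))\<^sup>2)"
  unfolding cinner_def of_real_sum complex_norm_square ..

lemma cnj_cinner: "cnj (cinner N v w) = cinner N w v"
  unfolding cinner_def by (simp add: mult.commute)

lemma cinner_scale_left: "cinner N (\<lambda>p. a * v p) w = a * cinner N v w"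
  unfolding cinner_def by (simp add: sum_distrib_left mult.assoc)

lemma cinner_scale_right: "cinner N v (\<lambda>p. a * w p) = cnj a * cinner N v w"
  unfolding cinner_def by (simp add: sum_distrib_left mult_ac)

lemma cinner_cong_left: "(\<And>p. p < N \<Longrightarrow> v p = v' p) \<Longrightarrow> cinner N v w = cinner N v' w"
  unfolding cinner_def by (intro sum.cong) auto

lemma cinner_cong_right: "(\<And>p. p < N \<Longrightarrow> w p = w' p) \<Longrightarrow> cinner N v w = cinner N v w'"
  unfolding cinner_def by (intro sum.cong) auto

lemma cinner_sum_sum:
  "cinner N (\<lambda>q. \<Sum>r<K. \<beta> r * w r q) (\<lambda>q. \<Sum>r'<K'. \<gamma> r' * v r' q)
     = (\<Sum>r<K. \<Sum>r'<K'. \<beta> r * cnj (\<gamma> r') * cinner N (w r) (v r'))"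
proof -
  have "cinner N (\<lambda>q. \<Sum>r<K. \<beta> r * w r q) (\<lambda>q. \<Sum>r'<K'. \<gamma> r' * v r' q)
      = (\<Sum>q<N. \<Sum>r'<K'. \<Sum>r<K. \<beta> r * cnj (\<gamma> r') * (w r q * cnj (v r' q)))"
    unfolding cinner_def by (simp add: cnj_sum sum_distrib_left sum_distrib_right mult_ac)
  also have "\<dots> = (\<Sum>r'<K'. \<Sum>r<K. \<Sum>q<N. \<beta> r * cnj (\<gamma> r') * (w r q * cnj (v r' q)))"
    by (subst sum.swap, rule sum.cong[OF refl], rule sum.swap)
  also have "\<dots> = (\<Sum>r<K. \<Sum>r'<K'. \<Sum>q<N. \<beta> r * cnj (\<gamma> r') * (w r q * cnj (v r' q)))"
    by (rule sum.swap)
  also have "\<dots> = (\<Sum>r<K. \<Sum>r'<K'. \<beta> r * cnj (\<gamma> r') * cinner N (w r) (v r'))"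
    unfolding cinner_def by (simp add: sum_distrib_left)
  finally show ?thesis .
qed

lemma sum_norm_squared_pos:
  fixes v :: "nat \<Rightarrow> complex"
  assumes "\<exists>p<N. v p \<noteq> 0"
  shows "(\<Sum>p<N. (cmod (v p))\<^sup>2) > 0"
proof -
  obtain p0 where "p0 < N" "v p0 \<noteq> 0" using assms by auto
  have "(cmod (v p0))\<^sup>2 \<le> (\<Sum>p<N. (cmod (v p))\<^sup>2)"
    by (rule member_le_sum) (use \<open>p0 < N\<close> in auto)
  moreover have "0 < (cmod (v p0))\<^sup>2" using \<open>v p0 \<noteq> 0\<close> by simp
  ultimately show ?thesis by linarith
qed

lemma mat_apply_sum: "mat_apply B N (\<lambda>q. \<Sum>r<K. \<beta> r * w r q) p = (\<Sum>r<K. \<beta> r * mat_apply B N (w r) p)"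
  unfolding mat_apply_def by (simp add: sum_distrib_left mult_ac) (rule sum.swap)

lemma hermitian_cinner:
  assumes "hermitian_mat B N"
  shows "cinner N (mat_apply B N v) w = cinner N v (mat_apply B N w)"
proof -
  have "cinner N (mat_apply B N v) w = (\<Sum>q<N. \<Sum>p<N. B $$ (p, q) * v q * cnj (w p))"
    unfolding cinner_def mat_apply_def by (subst sum.swap) (simp add: sum_distrib_right)
  also have "\<dots> = (\<Sum>q<N. \<Sum>p<N. v q * cnj (B $$ (q, p) * w p))"
  proof (intro sum.cong refl)
    fix p q assume "q \<in> {..<N}" "p \<in> {..<N}"
    hence "B $$ (p, q) = cnj (B $$ (q, p))" using assms unfolding hermitian_mat_def by blast
    thus "B $$ (p, q) * v q * cnj (w p) = v q * cnj (B $$ (q, p) * w p)" by (simp add: mult_ac)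
  qed
  also have "\<dots> = cinner N v (mat_apply B N w)"
    unfolding cinner_def mat_apply_def by (simp add: sum_distrib_left)
  finally show ?thesis .
qed

lemma exists_nonzero_orthogonal:
  fixes g :: "nat \<Rightarrow> nat \<Rightarrow> complex"
  assumes "k < N"
  shows "\<exists>v. (\<exists>p<N. v p \<noteq> 0) \<and> (\<forall>i<k. (\<Sum>p<N. g i p * v p) = 0)"
proof -
  define c where "c = (\<lambda>i. if i < k then vec N (g i) else 0\<^sub>v N)"
  define M where "M = mat\<^sub>r N N (\<lambda>i. if i = N - 1 then 0\<^sub>v N else c i)"
  have M: "M \<in> carrier_mat N N" unfolding M_def by auto
  have "det M = 0" unfolding M_def
    by (rule det_row_0) (use assms in \<open>auto simp: c_def\<close>)
  then obtain v where v: "v \<in> carrier_vec N" "v \<noteq> 0\<^sub>v N" "M *\<^sub>v v = 0\<^sub>v N"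
    using det_0_iff_vec_prod_zero[OF M] by auto
  have "\<exists>p<N. v $ p \<noteq> 0"
  proof (rule ccontr)
    assume "\<not> ?thesis"
    hence "v = 0\<^sub>v N" using v(1) by (intro eq_vecI) auto
    thus False using v(2) by simp
  qed
  moreover have "(\<Sum>p<N. g i p * v $ p) = 0" if "i < k" for i
  proof -
    have "0 = (M *\<^sub>v v) $ i" using v(3) that assms by simp
    also have "\<dots> = (\<Sum>p<N. g i p * v $ p)"
      using that assms v(1) unfolding M_def c_def
      by (auto simp: scalar_prod_def lessThan_atLeast0 intro!: sum.cong)
    finally show ?thesis by simp
  qed
  ultimately show ?thesis by (intro exI[of _ "\<lambda>p. v $ p"]) auto
qed

definition mat_trace :: "complex mat \<Rightarrow> nat \<Rightarrow> complex" where
  "mat_trace A N = (\<Sum>i<N. A $$ (i, i))"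

lemma mat_trace_mult:
  assumes "X \<in> carrier_mat N N" "Y \<in> carrier_mat N N"
  shows "mat_trace (X * Y) N = (\<Sum>i<N. \<Sum>k<N. X $$ (i, k) * Y $$ (k, i))"
  unfolding mat_trace_def using assms
  by (intro sum.cong refl) (auto simp: scalar_prod_def lessThan_atLeast0)

lemma mat_trace_mult_commute:
  assumes "X \<in> carrier_mat N N" "Y \<in> carrier_mat N N"
  shows "mat_trace (X * Y) N = mat_trace (Y * X) N"
  unfolding mat_trace_mult[OF assms] mat_trace_mult[OF assms(2,1)]
  by (subst sum.swap) (simp add: mult.commute)

lemma mat_trace_square_upper_triangular:
  assumes T: "T \<in> carrier_mat N N" "upper_triangular T"
    and diag: "\<And>i. i < N \<Longrightarrow> T $$ (i, i) = 0"
  shows "mat_trace (T * T) N = 0"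
proof -
  have "T $$ (i, k) * T $$ (k, i) = 0" if "i < N" "k < N" for i k
    using T diag that by (cases i k rule: linorder_cases) (auto simp: upper_triangular_def)
  thus ?thesis unfolding mat_trace_mult[OF T(1) T(1)] by (intro sum.neutral ballI) auto
qed

text \<open>By Schur, \<open>A\<close> is similar to a strictly upper triangular \<open>T\<close>, so
  \<open>\<Sum>|A\<^sub>p\<^sub>q|\<^sup>2 = tr (A * A) = tr (T * T) = 0\<close>.\<close>
lemma hermitian_mat_eq_0_if_char_poly_roots_0:
  assumes A: "A \<in> carrier_mat N N" and herm: "hermitian_mat A N"
    and cp: "char_poly A = (\<Prod>a\<leftarrow>as. [:- a, 1:])" and roots: "\<And>a. a \<in> set as \<Longrightarrow> a = 0"
    and "p < N" "q < N"
  shows "A $$ (p, q) = 0"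
proof -
  obtain T P Q where "schur_decomposition A as = (T, P, Q)"
    by (cases "schur_decomposition A as") auto
  from schur_decomposition[OF A cp this]
  have sim: "similar_mat_wit A T P Q" and T: "upper_triangular T" "diag_mat T = as" by auto
  have mats: "T \<in> carrier_mat N N" "P \<in> carrier_mat N N" "Q \<in> carrier_mat N N" "Q * P = 1\<^sub>m N"
    using similar_mat_witD2(2,5-7)[OF A sim] by auto
  have "T $$ (i, i) = 0" if "i < N" for i
    using roots[of "T $$ (i, i)"] T(2) mats(1) that by (auto simp: diag_mat_def)
  hence trT: "mat_trace (T * T) N = 0"
    using mats(1) T(1) by (intro mat_trace_square_upper_triangular) auto
  have "A * A = P * (T * T) * Q"
    using similar_mat_wit_pow_id[OF sim, of 2] mats(1) by (simp add: numeral_2_eq_2)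
  also have "\<dots> = P * (T * T * Q)"
    using mats by (intro assoc_mult_mat) auto
  finally have "mat_trace (A * A) N = mat_trace (P * (T * T * Q)) N" by (simp only:)
  also have "\<dots> = mat_trace (T * T * Q * P) N"
    by (rule mat_trace_mult_commute) (use mats in auto)
  also have "T * T * Q * P = T * T * (Q * P)"
    using mats by (intro assoc_mult_mat) auto
  also have "mat_trace \<dots> N = 0"
    using mats trT by simp
  finally have "mat_trace (A * A) N = 0" .
  moreover have "A $$ (i, k) * A $$ (k, i) = of_real ((cmod (A $$ (i, k)))\<^sup>2)" if "i < N" "k < N" for i k
  proof -
    have "A $$ (k, i) = cnj (A $$ (i, k))" using herm that unfolding hermitian_mat_def by blast
    thus ?thesis by (simp only: complex_norm_square)
  qed
  ultimately have "of_real (\<Sum>i<N. \<Sum>k<N. (cmod (A $$ (i, k)))\<^sup>2) = (0 :: complex)"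
    unfolding mat_trace_mult[OF A A] of_real_sum by simp
  hence "(\<Sum>i<N. \<Sum>k<N. (cmod (A $$ (i, k)))\<^sup>2) = 0" by (simp only: of_real_eq_0_iff)
  hence "(cmod (A $$ (p, q)))\<^sup>2 = 0"
    using \<open>p < N\<close> \<open>q < N\<close> by (simp add: sum_nonneg_eq_0_iff sum_nonneg)
  thus ?thesis by simp
qed

lemma exists_eigenvector_fun:
  assumes A: "A \<in> carrier_mat N N" and "poly (char_poly A) a = 0"
  shows "\<exists>f. (\<exists>p<N. f p \<noteq> 0) \<and> (\<forall>p<N. mat_apply A N f p = a * f p)"
proof -
  obtain w where "eigenvector A w a"
    using eigenvalue_root_char_poly[OF A] assms(2) unfolding eigenvalue_def by auto
  hence w: "w \<in> carrier_vec N" "w \<noteq> 0\<^sub>v N" "A *\<^sub>v w = a \<cdot>\<^sub>v w"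
    using A unfolding eigenvector_def by auto
  have "\<exists>p<N. w $ p \<noteq> 0"
  proof (rule ccontr)
    assume "\<not> ?thesis"
    hence "w = 0\<^sub>v N" using w(1) by (intro eq_vecI) auto
    thus False using w(2) by simp
  qed
  moreover have "mat_apply A N (\<lambda>p. w $ p) p = a * w $ p" if "p < N" for p
  proof -
    have "a * w $ p = (A *\<^sub>v w) $ p" using w that by simp
    also have "\<dots> = mat_apply A N (\<lambda>p. w $ p) p"
      using A w(1) that unfolding mat_apply_def
      by (auto simp: scalar_prod_def lessThan_atLeast0 intro!: sum.cong)
    finally show ?thesis by simp
  qed
  ultimately show ?thesis by blast
qed

lemma hermitian_eigenvector_real_orthogonal_to_kernel:
  assumes herm: "hermitian_mat A N" and nz: "\<exists>p<N. f p \<noteq> 0"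
    and ev: "\<forall>p<N. mat_apply A N f p = a * f p"
    and kernel: "\<And>p. p < N \<Longrightarrow> mat_apply A N w p = 0"
  shows "a = of_real (Re a)" and "a \<noteq> 0 \<Longrightarrow> cinner N f w = 0"
proof -
  have Af: "cinner N (mat_apply A N f) v = a * cinner N f v" for v
    by (subst cinner_scale_left[symmetric], rule cinner_cong_left) (use ev in simp)
  have "a * cinner N f f = cinner N f (mat_apply A N f)"
    unfolding Af[symmetric] by (rule hermitian_cinner[OF herm])
  also have "\<dots> = cinner N f (\<lambda>p. a * f p)" by (rule cinner_cong_right) (use ev in simp)
  finally have "a * cinner N f f = cnj a * cinner N f f" by (simp add: cinner_scale_right)
  moreover have "cinner N f f \<noteq> 0"
    using sum_norm_squared_pos[OF nz] by (simp only: cinner_self of_real_eq_0_iff)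
  ultimately show "a = of_real (Re a)"
    by (metis Reals_cnj_iff complex_is_Real_iff mult_cancel_right of_real_Re)
  have "a * cinner N f w = cinner N f (mat_apply A N w)"
    unfolding Af[symmetric] by (rule hermitian_cinner[OF herm])
  also have "\<dots> = cinner N f (\<lambda>p. 0)" by (rule cinner_cong_right) (use kernel in simp)
  finally show "a \<noteq> 0 \<Longrightarrow> cinner N f w = 0" by (simp add: cinner_def)
qed

text \<open>An eigenvector for a nonzero eigenvalue is orthogonal to the kernel; if all eigenvalues
  vanish, then \<open>A = 0\<close> and any vector orthogonal to the \<open>u i\<close> will do.\<close>
lemma hermitian_eigenvector_orthogonal_to_kernel:
  assumes A: "A \<in> carrier_mat N N" and herm: "hermitian_mat A N" and "k < N"
    and kernel: "\<And>i p. i < k \<Longrightarrow> p < N \<Longrightarrow> mat_apply A N (u i) p = 0"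
  shows "\<exists>f \<mu>. (\<exists>p<N. f p \<noteq> 0) \<and> (\<forall>i<k. cinner N f (u i) = 0)
           \<and> (\<forall>p<N. mat_apply A N f p = of_real \<mu> * f p)"
proof -
  obtain as where cp: "char_poly A = (\<Prod>a\<leftarrow>as. [:- a, 1:])"
    using char_poly_factorized[OF A] by auto
  show ?thesis
  proof (cases "\<exists>a\<in>set as. a \<noteq> 0")
    case True
    then obtain a where a: "a \<in> set as" "a \<noteq> 0" by auto
    have "poly (char_poly A) a = 0" unfolding cp using a(1)
      by (auto simp: poly_prod_list prod_list_zero_iff)
    then obtain f where nz: "\<exists>p<N. f p \<noteq> 0" and ev: "\<forall>p<N. mat_apply A N f p = a * f p"
      using exists_eigenvector_fun[OF A] by blast
    have "\<forall>i<k. cinner N f (u i) = 0"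
      using hermitian_eigenvector_real_orthogonal_to_kernel(2)[OF herm nz ev kernel] a(2) by blast
    moreover have "a = of_real (Re a)"
      by (rule hermitian_eigenvector_real_orthogonal_to_kernel(1)[OF herm nz ev, of "\<lambda>_. 0"])
        (simp add: mat_apply_def)
    ultimately show ?thesis using nz ev by (metis (no_types, lifting))
  next
    case False
    hence "A $$ (p, q) = 0" if "p < N" "q < N" for p q
      using hermitian_mat_eq_0_if_char_poly_roots_0[OF A herm cp _ that] by blast
    hence A0: "mat_apply A N f p = of_real 0 * f p" if "p < N" for f p
      using that unfolding mat_apply_def by simp
    obtain f where "\<exists>p<N. f p \<noteq> 0" "\<forall>i<k. (\<Sum>p<N. cnj (u i p) * f p) = 0"
      using exists_nonzero_orthogonal[OF \<open>k < N\<close>, of "\<lambda>i p. cnj (u i p)"] by auto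
    moreover have "\<forall>i<k. cinner N f (u i) = 0"
      using calculation(2) unfolding cinner_def by (simp add: mult.commute)
    ultimately show ?thesis using A0 by blast
  qed
qed

lemma normalize_eigenvector:
  assumes nz: "\<exists>p<N. f p \<noteq> 0" and orth: "\<forall>i<k. cinner N f (u i) = 0"
    and ev: "\<forall>p<N. mat_apply B N f p = of_real \<mu> * f p"
  shows "\<exists>v. (\<forall>i<k. cinner N v (u i) = 0) \<and> cinner N v v = 1
    \<and> (\<forall>p<N. mat_apply B N v p = of_real \<mu> * v p)"
proof -
  define S where "S = (\<Sum>p<N. (cmod (f p))\<^sup>2)"
  have S: "S > 0" unfolding S_def by (rule sum_norm_squared_pos[OF nz])
  define v where "v = (\<lambda>p. f p / of_real (sqrt S))"
  have "cinner N v (u i) = cinner N f (u i) / of_real (sqrt S)" for i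
    unfolding cinner_def v_def by (simp add: sum_divide_distrib)
  moreover have "cinner N v v = cinner N f f / of_real S"
    unfolding cinner_def v_def using S by (simp add: sum_divide_distrib flip: of_real_mult)
  moreover have "mat_apply B N v p = mat_apply B N f p / of_real (sqrt S)" for p
    unfolding mat_apply_def v_def by (simp add: sum_divide_distrib)
  ultimately show ?thesis
    using orth ev S unfolding cinner_self S_def[symmetric] by (intro exI[of _ v]) (auto simp: v_def)
qed

text \<open>Deflation: \<open>B - \<Sum>\<^sub>l d\<^sub>l u\<^sub>l u\<^sub>l\<^sup>*\<close> is Hermitian, kills the known eigenvectors and
  agrees with \<open>B\<close> on their orthogonal complement.\<close>
lemma hermitian_extend_eigenpairs:
  assumes B: "B \<in> carrier_mat N N" and herm: "hermitian_mat B N" and "k < N"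
    and ON: "orthonormal N k u" and EV: "eigenpairs B N k u d"
  shows "\<exists>v \<mu>. (\<forall>i<k. cinner N v (u i) = 0) \<and> cinner N v v = 1
           \<and> (\<forall>p<N. mat_apply B N v p = of_real \<mu> * v p)"
proof -
  define A where "A = mat N N (\<lambda>(p, q). B $$ (p, q) - (\<Sum>l<k. of_real (d l) * u l p * cnj (u l q)))"
  have A: "A \<in> carrier_mat N N" unfolding A_def by simp
  have A_entry: "A $$ (p, q) = B $$ (p, q) - (\<Sum>l<k. of_real (d l) * u l p * cnj (u l q))"
    if "p < N" "q < N" for p q
    using that unfolding A_def by simp
  have "hermitian_mat A N" unfolding hermitian_mat_def
  proof (intro allI impI)
    fix p q assume pq: "p < N" "q < N"
    hence "B $$ (q, p) = cnj (B $$ (p, q))" using herm unfolding hermitian_mat_def by blast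
    thus "A $$ (p, q) = cnj (A $$ (q, p))" using pq by (simp add: A_entry mult_ac)
  qed
  have A_apply: "mat_apply A N v p = mat_apply B N v p - (\<Sum>l<k. of_real (d l) * u l p * cinner N v (u l))"
    if "p < N" for v p
  proof -
    have "mat_apply A N v p
        = (\<Sum>q<N. B $$ (p, q) * v q - (\<Sum>l<k. of_real (d l) * u l p * (v q * cnj (u l q))))"
      unfolding mat_apply_def using that
      by (intro sum.cong refl)
        (simp add: A_entry right_diff_distrib left_diff_distrib sum_distrib_left sum_distrib_right mult_ac)
    also have "\<dots> = mat_apply B N v p - (\<Sum>l<k. of_real (d l) * u l p * cinner N v (u l))"
      unfolding mat_apply_def cinner_def sum_subtractf by (subst sum.swap) (simp add: sum_distrib_left)
    finally show ?thesis .
  qed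
  have "mat_apply A N (u i) p = 0" if "i < k" "p < N" for i p
  proof -
    have "(\<Sum>l<k. of_real (d l) * u l p * cinner N (u i) (u l))
        = (\<Sum>l<k. if l = i then of_real (d i) * u i p else 0)"
      using ON that unfolding orthonormal_def by (intro sum.cong refl) auto
    also have "\<dots> = of_real (d i) * u i p" using that by simp
    finally have "(\<Sum>l<k. of_real (d l) * u l p * cinner N (u i) (u l)) = of_real (d i) * u i p" .
    thus ?thesis using A_apply[OF that(2)] EV that unfolding eigenpairs_def by simp
  qed
  then obtain f \<mu> where nz: "\<exists>p<N. f p \<noteq> 0" and orth: "\<forall>i<k. cinner N f (u i) = 0"
    and ev: "\<forall>p<N. mat_apply A N f p = of_real \<mu> * f p"
    using hermitian_eigenvector_orthogonal_to_kernel[OF A \<open>hermitian_mat A N\<close> \<open>k < N\<close>] by blast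
  have "\<forall>p<N. mat_apply B N f p = of_real \<mu> * f p" using A_apply ev orth by simp
  from normalize_eigenvector[OF nz orth this] show ?thesis by blast
qed

lemma hermitian_eigenpairs:
  assumes B: "B \<in> carrier_mat N N" and herm: "hermitian_mat B N" and "k \<le> N"
  shows "\<exists>u d. orthonormal N k u \<and> eigenpairs B N k u d"
  using \<open>k \<le> N\<close>
proof (induction k)
  case 0
  show ?case by (simp add: orthonormal_def eigenpairs_def)
next
  case (Suc k)
  then obtain u d where ON: "orthonormal N k u" and EV: "eigenpairs B N k u d" by auto
  obtain v \<mu> where orth: "\<forall>i<k. cinner N v (u i) = 0" and unit: "cinner N v v = 1"
    and ev: "\<forall>p<N. mat_apply B N v p = of_real \<mu> * v p"
    using hermitian_extend_eigenpairs[OF B herm _ ON EV] Suc.prems by auto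
  have "cinner N (u i) v = 0" if "i < k" for i
    using orth that cnj_cinner[of N v "u i"] by simp
  hence "orthonormal N (Suc k) (u(k := v))"
    using ON orth unit unfolding orthonormal_def by (auto simp: less_Suc_eq)
  moreover have "eigenpairs B N (Suc k) (u(k := v)) (d(k := \<mu>))"
    using EV ev unfolding eigenpairs_def by (auto simp: less_Suc_eq)
  ultimately show ?case by blast
qed

lemma proots_prod_list_linear: "proots (\<Prod>a\<leftarrow>xs. [:- a, 1:]) = mset (xs :: complex list)"
proof (induction xs)
  case (Cons a xs)
  have "(\<Prod>a\<leftarrow>xs. [:- a, 1:]) \<noteq> (0 :: complex poly)" by (auto simp: prod_list_zero_iff)
  hence "proots ([:- a, 1:] * (\<Prod>a\<leftarrow>xs. [:- a, 1:])) = proots [:- a, 1:] + proots (\<Prod>a\<leftarrow>xs. [:- a, 1:])"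
    by (intro proots_mult) auto
  thus ?case using Cons proots_linear_factor[of "- a"] by simp
qed simp

lemma similar_diagonal_of_eigenpairs:
  assumes B: "B \<in> carrier_mat N N" and ON: "orthonormal N N u" and EV: "eigenpairs B N N u d"
  shows "similar_mat_wit B (mat N N (\<lambda>(i, j). if i = j then complex_of_real (d i) else 0))
    (mat N N (\<lambda>(p, i). u i p)) (mat N N (\<lambda>(i, p). cnj (u i p)))"
proof -
  define U where "U = mat N N (\<lambda>(p, i). u i p)"
  define U' where "U' = mat N N (\<lambda>(i, p). cnj (u i p))"
  define D where "D = mat N N (\<lambda>(i, j). if i = j then complex_of_real (d i) else 0)"
  have mats: "U \<in> carrier_mat N N" "U' \<in> carrier_mat N N" "D \<in> carrier_mat N N"
    unfolding U_def U'_def D_def by auto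
  have U'U: "U' * U = 1\<^sub>m N"
  proof (rule eq_matI)
    fix i l assume "i < dim_row (1\<^sub>m N :: complex mat)" "l < dim_col (1\<^sub>m N :: complex mat)"
    hence "i < N" "l < N" by auto
    hence "(U' * U) $$ (i, l) = cinner N (u l) (u i)"
      unfolding U'_def U_def cinner_def
      by (auto simp: scalar_prod_def lessThan_atLeast0 mult.commute intro!: sum.cong)
    also have "\<dots> = (1\<^sub>m N :: complex mat) $$ (i, l)"
      using ON \<open>i < N\<close> \<open>l < N\<close> unfolding orthonormal_def by auto
    finally show "(U' * U) $$ (i, l) = (1\<^sub>m N :: complex mat) $$ (i, l)" .
  qed (use mats in auto)
  have UU': "U * U' = 1\<^sub>m N" by (rule mat_mult_left_right_inverse[OF mats(2,1) U'U])
  have BU: "B * U = U * D"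
  proof (rule eq_matI)
    fix p i assume "p < dim_row (U * D)" "i < dim_col (U * D)"
    hence pi: "p < N" "i < N" using mats by auto
    have "(B * U) $$ (p, i) = mat_apply B N (u i) p"
      using B pi unfolding U_def mat_apply_def
      by (auto simp: scalar_prod_def lessThan_atLeast0 intro!: sum.cong)
    also have "\<dots> = (\<Sum>j<N. u j p * (if j = i then complex_of_real (d i) else 0))"
      using EV pi unfolding eigenpairs_def by (simp add: if_distrib mult.commute cong: if_cong)
    also have "\<dots> = (U * D) $$ (p, i)"
      using pi unfolding U_def D_def
      by (auto simp: scalar_prod_def lessThan_atLeast0 intro!: sum.cong)
    finally show "(B * U) $$ (p, i) = (U * D) $$ (p, i)" .
  qed (use B mats in auto)
  have "B = B * (U * U')" using B UU' by simp
  also have "\<dots> = U * D * U'" using BU assoc_mult_mat[OF B mats(1,2)] by simp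
  finally show ?thesis
    unfolding similar_mat_wit_def Let_def U_def[symmetric] U'_def[symmetric] D_def[symmetric]
    using B mats UU' U'U by auto
qed

lemma hermitian_spectral:
  assumes B: "B \<in> carrier_mat N N" and herm: "hermitian_mat B N"
  shows "\<exists>u d. orthonormal N N u \<and> eigenpairs B N N u d \<and>
           proots (char_poly B) = mset (map (\<lambda>i. complex_of_real (d i)) [0..<N])"
proof -
  obtain u d where ON: "orthonormal N N u" and EV: "eigenpairs B N N u d"
    using hermitian_eigenpairs[OF B herm order_refl] by auto
  define D where "D = mat N N (\<lambda>(i, j). if i = j then complex_of_real (d i) else 0)"
  have "char_poly B = char_poly D"
    using similar_diagonal_of_eigenpairs[OF B ON EV, folded D_def]
    by (intro char_poly_similar) (auto simp: similar_mat_def)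
  also have "\<dots> = (\<Prod>a\<leftarrow>diag_mat D. [:- a, 1:])"
    by (rule char_poly_upper_triangular) (auto simp: upper_triangular_def D_def)
  also have "diag_mat D = map (\<lambda>i. complex_of_real (d i)) [0..<N]"
    unfolding diag_mat_def D_def by auto
  finally have "proots (char_poly B) = mset (map (\<lambda>i. complex_of_real (d i)) [0..<N])"
    by (simp only: proots_prod_list_linear)
  with ON EV show ?thesis by blast
qed

section \<open>Singular values and Courant--Fischer\<close>

lemma adjoint_mult_carrier: "H \<in> carrier_mat N N \<Longrightarrow> mat_adjoint H * H \<in> carrier_mat N N"
  unfolding mat_adjoint_def mat_of_rows_def by auto

lemma adjoint_mult_entry:
  assumes "H \<in> carrier_mat N N" "p < N" "q < N"
  shows "(mat_adjoint H * H) $$ (p, q) = (\<Sum>r<N. cnj (H $$ (r, p)) * H $$ (r, q))"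
  using assms unfolding mat_adjoint_def mat_of_rows_def
  by (auto simp: scalar_prod_def lessThan_atLeast0 intro!: sum.cong)

lemma hermitian_adjoint_mult:
  assumes "H \<in> carrier_mat N N"
  shows "hermitian_mat (mat_adjoint H * H) N"
  unfolding hermitian_mat_def using adjoint_mult_entry[OF assms] by (simp add: mult.commute)

lemma cinner_mat_apply_adjoint_mult:
  assumes H: "H \<in> carrier_mat N N"
  shows "cinner N (mat_apply H N v) (mat_apply H N w) = cinner N (mat_apply (mat_adjoint H * H) N v) w"
proof -
  have "cinner N (mat_apply H N v) (mat_apply H N w)
      = (\<Sum>p<N. \<Sum>r<N. \<Sum>q<N. H $$ (p, q) * v q * cnj (H $$ (p, r) * w r))"
    unfolding cinner_def mat_apply_def by (simp add: sum_distrib_left sum_distrib_right cnj_sum)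
  also have "\<dots> = (\<Sum>r<N. \<Sum>q<N. \<Sum>p<N. H $$ (p, q) * v q * cnj (H $$ (p, r) * w r))"
    by (subst sum.swap, rule sum.cong[OF refl], rule sum.swap)
  also have "\<dots> = cinner N (mat_apply (mat_adjoint H * H) N v) w"
    unfolding cinner_def mat_apply_def using adjoint_mult_entry[OF H]
    by (simp add: sum_distrib_left sum_distrib_right mult_ac)
  finally show ?thesis .
qed

lemma nth_rev_sort_gt_iff:
  fixes ys :: "real list"
  assumes j: "j < length ys"
  shows "c < rev (sort ys) ! j \<longleftrightarrow> j < length (filter (\<lambda>x. c < x) ys)"
proof -
  define xs where "xs = rev (sort ys)"
  define G where "G = {i. i < length xs \<and> c < xs ! i}"
  have len: "length xs = length ys" unfolding xs_def by simp
  have "sorted_wrt (\<lambda>a b. b \<le> a) xs" unfolding xs_def sorted_wrt_rev by simp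
  hence mono: "xs ! b \<le> xs ! a" if "a \<le> b" "b < length xs" for a b
    using that unfolding sorted_wrt_iff_nth_less by (cases "a = b") auto
  have "length (filter (\<lambda>x. c < x) ys) = length (filter (\<lambda>x. c < x) xs)"
  proof -
    have "mset (filter (\<lambda>x. c < x) xs) = mset (filter (\<lambda>x. c < x) ys)" unfolding xs_def by simp
    thus ?thesis by (metis size_mset)
  qed
  also have "\<dots> = card G" unfolding G_def by (rule length_filter_conv_card)
  finally have count: "length (filter (\<lambda>x. c < x) ys) = card G" .
  show ?thesis
  proof
    assume "c < rev (sort ys) ! j"
    hence "{..j} \<subseteq> G" unfolding G_def xs_def[symmetric] using j len mono
      by (auto intro: order.strict_trans2)
    hence "card {..j} \<le> card G" unfolding G_def by (intro card_mono) auto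
    thus "j < length (filter (\<lambda>x. c < x) ys)" using count by simp
  next
    assume "j < length (filter (\<lambda>x. c < x) ys)"
    show "c < rev (sort ys) ! j"
    proof (rule ccontr)
      assume "\<not> ?thesis"
      hence "xs ! j \<le> c" unfolding xs_def by simp
      have "G \<subseteq> {..<j}"
      proof
        fix i assume "i \<in> G"
        hence "c < xs ! i" "i < length xs" unfolding G_def by auto
        thus "i \<in> {..<j}" using mono[of j i] \<open>xs ! j \<le> c\<close> by (cases "j \<le> i") auto
      qed
      hence "card G \<le> j" using card_mono[of "{..<j}" G] by simp
      thus False using \<open>j < length (filter (\<lambda>x. c < x) ys)\<close> count by simp
    qed
  qed
qed

lemma singular_values_eigenpairs:
  assumes H: "H \<in> carrier_mat N N"
  obtains u d where "orthonormal N N u" "eigenpairs (mat_adjoint H * H) N N u d"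
    "singular_values H = rev (sort (map (\<lambda>i. sqrt (d i)) [0..<N]))"
proof -
  let ?B = "mat_adjoint H * H"
  obtain u d where ON: "orthonormal N N u" and EV: "eigenpairs ?B N N u d"
    and roots: "proots (char_poly ?B) = mset (map (\<lambda>i. complex_of_real (d i)) [0..<N])"
    using hermitian_spectral[OF adjoint_mult_carrier[OF H] hermitian_adjoint_mult[OF H]] by blast
  have "singular_values H = rev (sort (map (\<lambda>i. sqrt (d i)) [0..<N]))"
    unfolding singular_values_def roots by (simp flip: mset_map add: comp_def)
  thus ?thesis using that ON EV by blast
qed

lemma sing_val_gt_iff_card:
  assumes sv: "singular_values H = rev (sort (map (\<lambda>i. sqrt (d i)) [0..<N]))"
    and "1 \<le> j" "j \<le> N" "0 \<le> c"
  shows "c < sing_val H j \<longleftrightarrow> j \<le> card {i. i < N \<and> c\<^sup>2 < d i}"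
proof -
  have sqrt_less: "c < sqrt x \<longleftrightarrow> c\<^sup>2 < x" for x
  proof
    assume "c < sqrt x"
    hence "c\<^sup>2 < (sqrt x)\<^sup>2" using \<open>0 \<le> c\<close> by (intro power_strict_mono) auto
    moreover have "0 < sqrt x" using \<open>c < sqrt x\<close> \<open>0 \<le> c\<close> by linarith
    hence "x > 0" by simp
    ultimately show "c\<^sup>2 < x" by simp
  qed (rule real_less_rsqrt)
  have "{i. i < length (map (\<lambda>i. sqrt (d i)) [0..<N]) \<and> c < map (\<lambda>i. sqrt (d i)) [0..<N] ! i}
      = {i. i < N \<and> c\<^sup>2 < d i}" by (auto simp: sqrt_less)
  hence count: "length (filter (\<lambda>x. c < x) (map (\<lambda>i. sqrt (d i)) [0..<N])) = card {i. i < N \<and> c\<^sup>2 < d i}"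
    by (simp only: length_filter_conv_card)
  have "c < sing_val H j \<longleftrightarrow> j - 1 < length (filter (\<lambda>x. c < x) (map (\<lambda>i. sqrt (d i)) [0..<N]))"
    unfolding sing_val_def sv by (rule nth_rev_sort_gt_iff) (use assms(2,3) in simp)
  thus ?thesis unfolding count using \<open>1 \<le> j\<close> by linarith
qed

lemma select_eigenpairs:
  assumes ON: "orthonormal N N u" and EV: "eigenpairs B N N u d" and "K \<le> card {i. i < N \<and> P (d i)}"
  obtains w lam where "orthonormal N K w" "eigenpairs B N K w lam" "\<And>r. r < K \<Longrightarrow> P (lam r)"
proof -
  obtain T where T: "T \<subseteq> {i. i < N \<and> P (d i)}" "card T = K"
    using obtain_subset_with_card_n[OF assms(3)] by blast
  have "finite T" by (rule finite_subset[OF T(1)]) simp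
  then obtain e where "bij_betw e {0..<card T} T" using ex_bij_betw_nat_finite by blast
  hence inj: "inj_on e {..<K}" and e: "\<And>r. r < K \<Longrightarrow> e r < N \<and> P (d (e r))"
    using T by (auto simp: lessThan_atLeast0 dest: bij_betw_imp_inj_on bij_betw_apply)
  have "orthonormal N K (\<lambda>r. u (e r))" unfolding orthonormal_def
  proof (intro allI impI)
    fix r r' assume "r < K" "r' < K"
    moreover have "e r = e r' \<longleftrightarrow> r = r'" using inj \<open>r < K\<close> \<open>r' < K\<close> by (simp add: inj_on_eq_iff)
    ultimately show "cinner N (u (e r)) (u (e r')) = (if r = r' then 1 else 0)"
      using ON e unfolding orthonormal_def by simp
  qed
  moreover have "eigenpairs B N K (\<lambda>r. u (e r)) (\<lambda>r. d (e r))"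
    using EV e unfolding eigenpairs_def by simp
  ultimately show ?thesis using that e by blast
qed

lemma exists_nonzero_common_combination:
  fixes w v :: "nat \<Rightarrow> nat \<Rightarrow> complex"
  assumes "N < K + k"
  shows "\<exists>\<beta> \<gamma>. ((\<exists>r<K. \<beta> r \<noteq> 0) \<or> (\<exists>j<k. \<gamma> j \<noteq> 0))
    \<and> (\<forall>q<N. (\<Sum>r<K. \<beta> r * w r q) = (\<Sum>j<k. \<gamma> j * v j q))"
proof -
  define M where "M = (\<lambda>q t. if t < K then w t q else - v (t - K) q)"
  obtain z where nz: "\<exists>t<K + k. z t \<noteq> 0" and kernel: "\<forall>q<N. (\<Sum>t<K + k. M q t * z t) = 0"
    using exists_nonzero_orthogonal[OF assms, of M] by auto
  have split: "(\<Sum>t<K + k. F t) = (\<Sum>t<K. F t) + (\<Sum>j<k. F (K + j))" for F :: "nat \<Rightarrow> complex"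
    by (induction k) (auto simp: add.assoc)
  have "(\<Sum>r<K. z r * w r q) = (\<Sum>j<k. z (K + j) * v j q)" if "q < N" for q
  proof -
    have "0 = (\<Sum>t<K + k. M q t * z t)" using kernel that by simp
    also have "\<dots> = (\<Sum>r<K. z r * w r q) - (\<Sum>j<k. z (K + j) * v j q)"
      unfolding split M_def by (simp add: sum_negf mult.commute)
    finally show ?thesis by simp
  qed
  moreover have "(\<exists>r<K. z r \<noteq> 0) \<or> (\<exists>j<k. z (K + j) \<noteq> 0)"
  proof -
    obtain t where "t < K + k" "z t \<noteq> 0" using nz by blast
    show ?thesis
    proof (cases "t < K")
      case False
      hence "t - K < k" "K + (t - K) = t" using \<open>t < K + k\<close> by auto
      thus ?thesis using \<open>z t \<noteq> 0\<close> by (intro disjI2 exI[of _ "t - K"]) simp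
    qed (use \<open>z t \<noteq> 0\<close> in blast)
  qed
  ultimately show ?thesis by (intro exI[of _ z] exI[of _ "\<lambda>j. z (K + j)"]) simp
qed

lemma norms_eigen_combination:
  assumes H: "H \<in> carrier_mat N N"
    and ON: "orthonormal N K w" and EV: "eigenpairs (mat_adjoint H * H) N K w lam"
    and x: "x = (\<lambda>q. \<Sum>r<K. \<beta> r * w r q)"
  shows "(\<Sum>q<N. (cmod (x q))\<^sup>2) = (\<Sum>r<K. (cmod (\<beta> r))\<^sup>2)"
    and "(\<Sum>p<N. (cmod (mat_apply H N x p))\<^sup>2) = (\<Sum>r<K. lam r * (cmod (\<beta> r))\<^sup>2)"
proof -
  have diag: "(\<Sum>r<K. \<Sum>r'<K. f r * cnj (\<beta> r') * cinner N (w r) (w r')) = (\<Sum>r<K. f r * cnj (\<beta> r))"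
    for f :: "nat \<Rightarrow> complex"
  proof -
    have "(\<Sum>r<K. \<Sum>r'<K. f r * cnj (\<beta> r') * cinner N (w r) (w r'))
        = (\<Sum>r<K. \<Sum>r'<K. if r' = r then f r * cnj (\<beta> r) else 0)"
      using ON unfolding orthonormal_def by (intro sum.cong refl) auto
    thus ?thesis by simp
  qed
  have "of_real (\<Sum>q<N. (cmod (x q))\<^sup>2) = cinner N x x" by (simp only: cinner_self)
  also have "\<dots> = (\<Sum>r<K. \<beta> r * cnj (\<beta> r))" unfolding x cinner_sum_sum by (rule diag)
  also have "\<dots> = of_real (\<Sum>r<K. (cmod (\<beta> r))\<^sup>2)"
    unfolding of_real_sum complex_norm_square ..
  finally show "(\<Sum>q<N. (cmod (x q))\<^sup>2) = (\<Sum>r<K. (cmod (\<beta> r))\<^sup>2)" by (simp only: of_real_eq_iff)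
  have "of_real (\<Sum>p<N. (cmod (mat_apply H N x p))\<^sup>2) = cinner N (mat_apply (mat_adjoint H * H) N x) x"
    by (simp only: cinner_self[symmetric] cinner_mat_apply_adjoint_mult[OF H])
  also have "\<dots> = cinner N (\<lambda>p. \<Sum>r<K. (\<beta> r * of_real (lam r)) * w r p) x"
    using EV unfolding eigenpairs_def by (intro cinner_cong_left) (simp add: x mat_apply_sum mult_ac)
  also have "\<dots> = (\<Sum>r<K. (\<beta> r * of_real (lam r)) * cnj (\<beta> r))" unfolding x cinner_sum_sum by (rule diag)
  also have "\<dots> = of_real (\<Sum>r<K. lam r * (cmod (\<beta> r))\<^sup>2)"
    unfolding of_real_sum of_real_mult complex_norm_square by (simp only: mult_ac)
  finally show "(\<Sum>p<N. (cmod (mat_apply H N x p))\<^sup>2) = (\<Sum>r<K. lam r * (cmod (\<beta> r))\<^sup>2)"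
    by (simp only: of_real_eq_iff)
qed

text \<open>Upper half of Courant--Fischer: if \<open>\<parallel>H x\<parallel> \<le> c \<parallel>x\<parallel>\<close> on the kernel of \<open>k\<close> functionals,
  a nonzero combination of \<open>k + 1\<close> eigenvectors with eigenvalue \<open>> c\<^sup>2\<close> would lie in that kernel.\<close>
lemma sing_val_le_if_bounded_on_kernel:
  fixes H :: "complex mat" and g :: "nat \<Rightarrow> nat \<Rightarrow> complex"
  assumes H: "H \<in> carrier_mat N N" and "0 \<le> c" and "k < j" "j \<le> N"
    and bound: "\<And>x. \<forall>i<k. (\<Sum>q<N. g i q * x q) = 0 \<Longrightarrow>
      (\<Sum>p<N. (cmod (mat_apply H N x p))\<^sup>2) \<le> c\<^sup>2 * (\<Sum>q<N. (cmod (x q))\<^sup>2)"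
  shows "sing_val H j \<le> c"
proof (rule ccontr)
  assume "\<not> sing_val H j \<le> c"
  obtain u d where ON: "orthonormal N N u" and EV: "eigenpairs (mat_adjoint H * H) N N u d"
    and sv: "singular_values H = rev (sort (map (\<lambda>i. sqrt (d i)) [0..<N]))"
    using singular_values_eigenpairs[OF H] by blast
  have "Suc k \<le> card {i. i < N \<and> c\<^sup>2 < d i}"
    using sing_val_gt_iff_card[OF sv _ \<open>j \<le> N\<close> \<open>0 \<le> c\<close>] \<open>\<not> sing_val H j \<le> c\<close> \<open>k < j\<close> by simp
  then obtain w lam where ONw: "orthonormal N (Suc k) w"
    and EVw: "eigenpairs (mat_adjoint H * H) N (Suc k) w lam" and lam: "\<And>r. r < Suc k \<Longrightarrow> c\<^sup>2 < lam r"
    using select_eigenpairs[OF ON EV, where P = "\<lambda>x. c\<^sup>2 < x"] by blast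
  obtain \<beta> where nz: "\<exists>r<Suc k. \<beta> r \<noteq> 0"
    and kernel: "\<forall>i<k. (\<Sum>r<Suc k. (\<Sum>q<N. g i q * w r q) * \<beta> r) = 0"
    using exists_nonzero_orthogonal[of k "Suc k" "\<lambda>i r. \<Sum>q<N. g i q * w r q"] by auto
  define x where "x = (\<lambda>q. \<Sum>r<Suc k. \<beta> r * w r q)"
  have "(\<Sum>q<N. g i q * x q) = (\<Sum>r<Suc k. (\<Sum>q<N. g i q * w r q) * \<beta> r)" for i
    unfolding x_def sum_distrib_left
    by (subst sum.swap) (simp add: sum_distrib_left sum_distrib_right mult_ac del: sum.lessThan_Suc)
  hence "(\<Sum>r<Suc k. lam r * (cmod (\<beta> r))\<^sup>2) \<le> c\<^sup>2 * (\<Sum>r<Suc k. (cmod (\<beta> r))\<^sup>2)"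
    using bound[of x] kernel norms_eigen_combination[OF H ONw EVw x_def] by (simp del: sum.lessThan_Suc)
  moreover have "c\<^sup>2 * (\<Sum>r<Suc k. (cmod (\<beta> r))\<^sup>2) < (\<Sum>r<Suc k. lam r * (cmod (\<beta> r))\<^sup>2)"
  proof (unfold sum_distrib_left, rule sum_strict_mono_ex1)
    show "\<forall>r\<in>{..<Suc k}. c\<^sup>2 * (cmod (\<beta> r))\<^sup>2 \<le> lam r * (cmod (\<beta> r))\<^sup>2"
      using lam by (auto intro!: mult_right_mono simp: less_imp_le)
    obtain r where "r < Suc k" "\<beta> r \<noteq> 0" using nz by auto
    thus "\<exists>r\<in>{..<Suc k}. c\<^sup>2 * (cmod (\<beta> r))\<^sup>2 < lam r * (cmod (\<beta> r))\<^sup>2"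
      using lam[of r] by (intro bexI[of _ r]) auto
  qed simp
  ultimately show False by simp
qed

text \<open>Lower half of Courant--Fischer: a nonzero vector in the span of the \<open>k\<close> given vectors
  and of \<open>N - k + 1\<close> eigenvectors with eigenvalue \<open>\<le> c\<^sup>2\<close> would contradict the lower bound.\<close>
lemma sing_val_gt_if_bounded_below_on_span:
  fixes H :: "complex mat" and v :: "nat \<Rightarrow> nat \<Rightarrow> complex"
  assumes H: "H \<in> carrier_mat N N" and "0 \<le> c" and "1 \<le> k" "k \<le> N"
    and below: "\<And>\<gamma>. \<exists>j<k. \<gamma> j \<noteq> 0 \<Longrightarrow>
      c\<^sup>2 * (\<Sum>q<N. (cmod (\<Sum>j<k. \<gamma> j * v j q))\<^sup>2)
        < (\<Sum>p<N. (cmod (mat_apply H N (\<lambda>q. \<Sum>j<k. \<gamma> j * v j q) p))\<^sup>2)"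
  shows "c < sing_val H k"
proof (rule ccontr)
  assume "\<not> c < sing_val H k"
  obtain u d where ON: "orthonormal N N u" and EV: "eigenpairs (mat_adjoint H * H) N N u d"
    and sv: "singular_values H = rev (sort (map (\<lambda>i. sqrt (d i)) [0..<N]))"
    using singular_values_eigenpairs[OF H] by blast
  define K where "K = N - k + 1"
  have "card {i. i < N \<and> c\<^sup>2 < d i} < k"
    using sing_val_gt_iff_card[OF sv assms(3,4) \<open>0 \<le> c\<close>] \<open>\<not> c < sing_val H k\<close> by simp
  moreover have "card {i. i < N \<and> c\<^sup>2 < d i} + card {i. i < N \<and> d i \<le> c\<^sup>2} = N"
  proof -
    have "{i. i < N \<and> c\<^sup>2 < d i} \<union> {i. i < N \<and> d i \<le> c\<^sup>2} = {..<N}"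
      "{i. i < N \<and> c\<^sup>2 < d i} \<inter> {i. i < N \<and> d i \<le> c\<^sup>2} = {}" by auto
    thus ?thesis using card_Un_disjoint[of "{i. i < N \<and> c\<^sup>2 < d i}" "{i. i < N \<and> d i \<le> c\<^sup>2}"] by simp
  qed
  ultimately have "K \<le> card {i. i < N \<and> d i \<le> c\<^sup>2}" unfolding K_def using \<open>k \<le> N\<close> by linarith
  then obtain w lam where ONw: "orthonormal N K w"
    and EVw: "eigenpairs (mat_adjoint H * H) N K w lam" and lam: "\<And>r. r < K \<Longrightarrow> lam r \<le> c\<^sup>2"
    using select_eigenpairs[OF ON EV, where P = "\<lambda>x. x \<le> c\<^sup>2"] by blast
  obtain \<beta> \<gamma> where nz: "(\<exists>r<K. \<beta> r \<noteq> 0) \<or> (\<exists>j<k. \<gamma> j \<noteq> 0)"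
    and xy: "\<forall>q<N. (\<Sum>r<K. \<beta> r * w r q) = (\<Sum>j<k. \<gamma> j * v j q)"
    using exists_nonzero_common_combination[of N K k w v] \<open>k \<le> N\<close> unfolding K_def by auto
  define x where "x = (\<lambda>q. \<Sum>r<K. \<beta> r * w r q)"
  have norms: "(\<Sum>q<N. (cmod (x q))\<^sup>2) = (\<Sum>r<K. (cmod (\<beta> r))\<^sup>2)"
    "(\<Sum>p<N. (cmod (mat_apply H N x p))\<^sup>2) = (\<Sum>r<K. lam r * (cmod (\<beta> r))\<^sup>2)"
    using norms_eigen_combination[OF H ONw EVw x_def] by auto
  show False
  proof (cases "\<exists>j<k. \<gamma> j \<noteq> 0")
    case True
    have "mat_apply H N x p = mat_apply H N (\<lambda>q. \<Sum>j<k. \<gamma> j * v j q) p" for p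
      unfolding mat_apply_def x_def using xy by simp
    hence "c\<^sup>2 * (\<Sum>q<N. (cmod (x q))\<^sup>2) < (\<Sum>p<N. (cmod (mat_apply H N x p))\<^sup>2)"
      using below[OF True] xy unfolding x_def by simp
    also have "\<dots> \<le> c\<^sup>2 * (\<Sum>q<N. (cmod (x q))\<^sup>2)"
      unfolding norms sum_distrib_left using lam by (intro sum_mono mult_right_mono) auto
    finally show False by simp
  next
    case False
    hence "(\<Sum>r<K. (cmod (\<beta> r))\<^sup>2) = 0"
      using xy norms(1) unfolding x_def by simp
    hence "\<forall>r<K. \<beta> r = 0" by (simp add: sum_nonneg_eq_0_iff)
    thus False using nz False by blast
  qed
qed

section \<open>Hankel matrices of a low-rank signal plus noise\<close>

lemma two_mult_le_div_add_mult:
  fixes a b t :: real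
  assumes "t > 0"
  shows "2 * a * b \<le> a\<^sup>2 / t + t * b\<^sup>2"
proof -
  have "2 * a * b * t \<le> a\<^sup>2 + (t * b)\<^sup>2" using sum_squares_bound[of a "t * b"] by (simp add: mult_ac)
  thus ?thesis using assms by (simp add: field_simps power2_eq_square)
qed

lemma sum_squared_le_card_mult_sum_squares:
  fixes a :: "nat \<Rightarrow> real"
  shows "(\<Sum>i<N. a i)\<^sup>2 \<le> real N * (\<Sum>i<N. (a i)\<^sup>2)"
proof -
  have "(\<Sum>i<N. a i)\<^sup>2 = (\<Sum>i<N. \<Sum>j<N. a i * a j)"
    by (simp add: power2_eq_square sum_product)
  also have "\<dots> \<le> (\<Sum>i<N. \<Sum>j<N. ((a i)\<^sup>2 + (a j)\<^sup>2) / 2)"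
    using two_mult_le_div_add_mult[of 1] by (intro sum_mono) (simp add: mult_ac)
  also have "\<dots> = real N * (\<Sum>i<N. (a i)\<^sup>2)"
    by (simp add: add_divide_distrib sum.distrib sum_divide_distrib sum.swap[of _ "{..<N}"] sum_distrib_left)
  finally show ?thesis .
qed

lemma sum_norm_squared_diff_le:
  fixes a b :: "nat \<Rightarrow> complex"
  shows "(\<Sum>p<N. (cmod (a p - b p))\<^sup>2) \<le> 2 * (\<Sum>p<N. (cmod (a p))\<^sup>2) + 2 * (\<Sum>p<N. (cmod (b p))\<^sup>2)"
proof -
  have "(cmod (a p - b p))\<^sup>2 \<le> 2 * (cmod (a p))\<^sup>2 + 2 * (cmod (b p))\<^sup>2" for p
  proof -
    have "(cmod (a p - b p))\<^sup>2 \<le> (cmod (a p) + cmod (b p))\<^sup>2"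
      by (intro power_mono norm_triangle_ineq4) auto
    thus ?thesis using two_mult_le_div_add_mult[of 1 "cmod (a p)" "cmod (b p)"]
      by (simp add: power2_sum)
  qed
  hence "(\<Sum>p<N. (cmod (a p - b p))\<^sup>2) \<le> (\<Sum>p<N. 2 * (cmod (a p))\<^sup>2 + 2 * (cmod (b p))\<^sup>2)"
    by (intro sum_mono)
  thus ?thesis by (simp add: sum.distrib sum_distrib_left)
qed

lemma hankel_noise_bound:
  fixes W :: "nat \<Rightarrow> complex" and v :: "nat \<Rightarrow> complex"
  assumes noise: "\<And>t. t \<in> {1..2*s+1} \<Longrightarrow> cmod (W t) \<le> \<sigma>"
  shows "(\<Sum>p<s+1. (cmod (\<Sum>q<s+1. W (p + q + 1) * v q))\<^sup>2)
    \<le> ((real s + 1) * \<sigma>)\<^sup>2 * (\<Sum>q<s+1. (cmod (v q))\<^sup>2)"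
proof -
  have "0 \<le> \<sigma>" using noise[of 1] by (auto intro: order_trans[OF norm_ge_zero])
  have row: "(cmod (\<Sum>q<s+1. W (p + q + 1) * v q))\<^sup>2 \<le> \<sigma>\<^sup>2 * ((real s + 1) * (\<Sum>q<s+1. (cmod (v q))\<^sup>2))"
    if "p < s + 1" for p
  proof -
    have "cmod (\<Sum>q<s+1. W (p + q + 1) * v q) \<le> (\<Sum>q<s+1. \<sigma> * cmod (v q))"
      using that by (intro order_trans[OF norm_sum] sum_mono) (auto simp: norm_mult intro!: mult_right_mono noise)
    hence "(cmod (\<Sum>q<s+1. W (p + q + 1) * v q))\<^sup>2 \<le> \<sigma>\<^sup>2 * (\<Sum>q<s+1. cmod (v q))\<^sup>2"
      by (simp add: sum_distrib_left[symmetric] power_mult_distrib[symmetric] power_mono)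
    also have "\<dots> \<le> \<sigma>\<^sup>2 * ((real s + 1) * (\<Sum>q<s+1. (cmod (v q))\<^sup>2))"
      using sum_squared_le_card_mult_sum_squares[of "\<lambda>q. cmod (v q)" "s + 1"]
      by (intro mult_left_mono) (auto simp: add.commute simp del: sum.lessThan_Suc)
    finally show ?thesis .
  qed
  have "(\<Sum>p<s+1. (cmod (\<Sum>q<s+1. W (p + q + 1) * v q))\<^sup>2)
      \<le> (\<Sum>p<s+1. \<sigma>\<^sup>2 * ((real s + 1) * (\<Sum>q<s+1. (cmod (v q))\<^sup>2)))"
    using row by (intro sum_mono) auto
  also have "\<dots> = ((real s + 1) * \<sigma>)\<^sup>2 * (\<Sum>q<s+1. (cmod (v q))\<^sup>2)"
    by (simp add: power2_eq_square algebra_simps)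
  finally show ?thesis .
qed

text \<open>If the synthesis map \<open>\<gamma> \<mapsto> \<Sum>\<^sub>j \<gamma>\<^sub>j \<phi>\<^sub>j\<close> is bounded below, so is the analysis map at its image:
  \<open>\<parallel>y\<parallel>\<^sup>2 = \<Sum>\<^sub>j \<gamma>\<^sub>j \<langle>\<phi>\<^sub>j, y\<rangle> \<le> \<parallel>\<gamma>\<parallel>\<^sup>2 / (2K) + K/2 \<Sum>\<^sub>j |\<langle>y, \<phi>\<^sub>j\<rangle>|\<^sup>2\<close>.\<close>
lemma synthesis_norm_le_analysis_norm:
  fixes \<phi> :: "nat \<Rightarrow> nat \<Rightarrow> complex" and \<gamma> :: "nat \<Rightarrow> complex" and n N :: nat
  defines "y \<equiv> (\<lambda>q. \<Sum>j<n. \<gamma> j * \<phi> j q)"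
  assumes "K > 0" and frame: "(\<Sum>j<n. (cmod (\<gamma> j))\<^sup>2) \<le> K * (\<Sum>q<N. (cmod (y q))\<^sup>2)"
  shows "(\<Sum>q<N. (cmod (y q))\<^sup>2) \<le> K * (\<Sum>j<n. (cmod (cinner N y (\<phi> j)))\<^sup>2)"
proof -
  define Sy where "Sy = (\<Sum>q<N. (cmod (y q))\<^sup>2)"
  define g where "g = (\<lambda>j. cinner N y (\<phi> j))"
  have "cinner N y y = cinner N y (\<lambda>q. \<Sum>j<n. \<gamma> j * \<phi> j q)" by (simp only: y_def[symmetric])
  also have "\<dots> = (\<Sum>j<n. cnj (\<gamma> j) * g j)"
    unfolding g_def cinner_def cnj_sum sum_distrib_left by (subst sum.swap) (simp add: mult_ac)
  finally have "cinner N y y = (\<Sum>j<n. cnj (\<gamma> j) * g j)" .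
  moreover have "Sy = cmod (cinner N y y)"
    unfolding Sy_def cinner_self norm_of_real by (simp add: sum_nonneg)
  ultimately have "Sy \<le> (\<Sum>j<n. cmod (\<gamma> j) * cmod (g j))"
    using norm_sum[of "\<lambda>j. cnj (\<gamma> j) * g j" "{..<n}"] by (simp add: norm_mult)
  also have "\<dots> \<le> (\<Sum>j<n. ((cmod (\<gamma> j))\<^sup>2 / K + K * (cmod (g j))\<^sup>2) / 2)"
  proof (rule sum_mono)
    fix j
    show "cmod (\<gamma> j) * cmod (g j) \<le> ((cmod (\<gamma> j))\<^sup>2 / K + K * (cmod (g j))\<^sup>2) / 2"
      using two_mult_le_div_add_mult[OF \<open>K > 0\<close>, of "cmod (\<gamma> j)" "cmod (g j)"] by simp
  qed
  also have "\<dots> = (\<Sum>j<n. (cmod (\<gamma> j))\<^sup>2) / (2 * K) + K / 2 * (\<Sum>j<n. (cmod (g j))\<^sup>2)"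
    by (simp add: sum.distrib sum_divide_distrib sum_distrib_left add_divide_distrib mult.commute)
  also have "(\<Sum>j<n. (cmod (\<gamma> j))\<^sup>2) / (2 * K) \<le> Sy / 2"
    using frame \<open>K > 0\<close> unfolding Sy_def by (simp add: field_simps)
  finally show ?thesis unfolding Sy_def g_def by simp
qed

lemma mat_apply_rank_plus_noise:
  fixes H :: "complex mat" and b x :: "nat \<Rightarrow> complex" and E :: "nat \<Rightarrow> nat \<Rightarrow> complex"
  assumes entries: "\<And>p q. p < N \<Longrightarrow> q < N \<Longrightarrow> H $$ (p, q) = (\<Sum>j<n. b j * x j ^ p * x j ^ q) + E p q"
    and "p < N"
  shows "mat_apply H N v p = (\<Sum>j<n. b j * (\<Sum>q<N. x j ^ q * v q) * x j ^ p) + (\<Sum>q<N. E p q * v q)"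
proof -
  have "mat_apply H N v p = (\<Sum>q<N. (\<Sum>j<n. b j * x j ^ p * (x j ^ q * v q)) + E p q * v q)"
    unfolding mat_apply_def using \<open>p < N\<close>
    by (intro sum.cong refl)
      (simp add: entries distrib_left distrib_right sum_distrib_left sum_distrib_right mult_ac)
  also have "\<dots> = (\<Sum>j<n. b j * x j ^ p * (\<Sum>q<N. x j ^ q * v q)) + (\<Sum>q<N. E p q * v q)"
    by (simp add: sum.distrib sum_distrib_left) (rule sum.swap)
  finally show ?thesis by (simp add: mult_ac)
qed

lemma sing_val_le_of_rank_plus_noise:
  fixes H :: "complex mat" and b x :: "nat \<Rightarrow> complex" and E :: "nat \<Rightarrow> nat \<Rightarrow> complex"
  assumes H: "H \<in> carrier_mat N N" and "0 \<le> c" "n < k" "k \<le> N"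
    and entries: "\<And>p q. p < N \<Longrightarrow> q < N \<Longrightarrow> H $$ (p, q) = (\<Sum>j<n. b j * x j ^ p * x j ^ q) + E p q"
    and noise: "\<And>v. (\<Sum>p<N. (cmod (\<Sum>q<N. E p q * v q))\<^sup>2) \<le> c\<^sup>2 * (\<Sum>q<N. (cmod (v q))\<^sup>2)"
  shows "sing_val H k \<le> c"
proof (rule sing_val_le_if_bounded_on_kernel[OF H assms(2-4)])
  fix v assume kernel: "\<forall>j<n. (\<Sum>q<N. x j ^ q * v q) = 0"
  have "mat_apply H N v p = (\<Sum>q<N. E p q * v q)" if "p < N" for p
    using mat_apply_rank_plus_noise[OF entries that, of v] kernel by simp
  thus "(\<Sum>p<N. (cmod (mat_apply H N v p))\<^sup>2) \<le> c\<^sup>2 * (\<Sum>q<N. (cmod (v q))\<^sup>2)"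
    using noise[of v] by simp
qed

text \<open>The signal part is bounded below by \<open>m / K\<close> on the span of the conjugated Vandermonde
  columns: the synthesis bound turns the Vandermonde bound around.\<close>
lemma signal_bounded_below:
  fixes b x \<gamma> :: "nat \<Rightarrow> complex" and n N :: nat and K m :: real
  defines "y \<equiv> (\<lambda>q. \<Sum>j<n. \<gamma> j * cnj (x j ^ q))"
  assumes vandermonde: "\<And>\<gamma>. (\<Sum>j<n. (cmod (\<gamma> j))\<^sup>2) \<le> K * (\<Sum>q<N. (cmod (\<Sum>j<n. \<gamma> j * x j ^ q))\<^sup>2)"
    and "K > 0" "0 \<le> m" and amplitudes: "\<And>j. j < n \<Longrightarrow> m \<le> cmod (b j)"
  shows "(\<Sum>j<n. (cmod (\<gamma> j))\<^sup>2) \<le> K * (\<Sum>q<N. (cmod (y q))\<^sup>2)"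
    and "m\<^sup>2 * (\<Sum>q<N. (cmod (y q))\<^sup>2)
      \<le> K\<^sup>2 * (\<Sum>p<N. (cmod (\<Sum>j<n. b j * (\<Sum>q<N. x j ^ q * y q) * x j ^ p))\<^sup>2)"
proof -
  define g where "g = (\<lambda>j. cinner N y (\<lambda>q. cnj (x j ^ q)))"
  have g: "g j = (\<Sum>q<N. x j ^ q * y q)" for j unfolding g_def cinner_def by (simp add: mult.commute)
  have "(\<Sum>j<n. cnj (\<gamma> j) * x j ^ q) = cnj (y q)" for q
    unfolding y_def by (simp add: cnj_sum)
  thus frame: "(\<Sum>j<n. (cmod (\<gamma> j))\<^sup>2) \<le> K * (\<Sum>q<N. (cmod (y q))\<^sup>2)"
    using vandermonde[of "\<lambda>j. cnj (\<gamma> j)"] by (simp only: complex_mod_cnj)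
  have "m\<^sup>2 * (\<Sum>j<n. (cmod (g j))\<^sup>2) = (\<Sum>j<n. (m * cmod (g j))\<^sup>2)"
    by (simp add: sum_distrib_left power_mult_distrib)
  also have "\<dots> \<le> (\<Sum>j<n. (cmod (b j * g j))\<^sup>2)"
    using amplitudes \<open>0 \<le> m\<close> by (intro sum_mono power_mono) (auto simp: norm_mult intro: mult_right_mono)
  also have "\<dots> \<le> K * (\<Sum>p<N. (cmod (\<Sum>j<n. b j * g j * x j ^ p))\<^sup>2)"
    by (rule vandermonde)
  finally have signal: "m\<^sup>2 * (\<Sum>j<n. (cmod (g j))\<^sup>2) \<le> K * (\<Sum>p<N. (cmod (\<Sum>j<n. b j * g j * x j ^ p))\<^sup>2)" .
  have "(\<Sum>q<N. (cmod (y q))\<^sup>2) \<le> K * (\<Sum>j<n. (cmod (g j))\<^sup>2)"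
    using synthesis_norm_le_analysis_norm[OF \<open>K > 0\<close> frame[unfolded y_def]] unfolding g_def y_def .
  hence "m\<^sup>2 * (\<Sum>q<N. (cmod (y q))\<^sup>2) \<le> m\<^sup>2 * (K * (\<Sum>j<n. (cmod (g j))\<^sup>2))"
    by (intro mult_left_mono) auto
  also have "\<dots> = K * (m\<^sup>2 * (\<Sum>j<n. (cmod (g j))\<^sup>2))" by (simp only: mult_ac)
  also have "\<dots> \<le> K * (K * (\<Sum>p<N. (cmod (\<Sum>j<n. b j * g j * x j ^ p))\<^sup>2))"
    using signal \<open>K > 0\<close> by (intro mult_left_mono) auto
  finally show "m\<^sup>2 * (\<Sum>q<N. (cmod (y q))\<^sup>2)
      \<le> K\<^sup>2 * (\<Sum>p<N. (cmod (\<Sum>j<n. b j * (\<Sum>q<N. x j ^ q * y q) * x j ^ p))\<^sup>2)"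
    by (simp add: g power2_eq_square mult.assoc)
qed

text \<open>Since \<open>\<parallel>H y\<parallel> \<ge> (m / K) \<parallel>y\<parallel> - c \<parallel>y\<parallel>\<close> on that span, \<open>2 c K < m\<close> gives \<open>\<parallel>H y\<parallel> > c \<parallel>y\<parallel>\<close>
  (squared, with \<open>|a - b|\<^sup>2 \<le> 2 |a|\<^sup>2 + 2 |b|\<^sup>2\<close> in place of the triangle inequality).\<close>
lemma sing_val_gt_of_rank_plus_noise:
  fixes H :: "complex mat" and b x :: "nat \<Rightarrow> complex" and E :: "nat \<Rightarrow> nat \<Rightarrow> complex"
  assumes H: "H \<in> carrier_mat N N" and "0 \<le> c" "1 \<le> n" "n \<le> N"
    and entries: "\<And>p q. p < N \<Longrightarrow> q < N \<Longrightarrow> H $$ (p, q) = (\<Sum>j<n. b j * x j ^ p * x j ^ q) + E p q"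
    and noise: "\<And>v. (\<Sum>p<N. (cmod (\<Sum>q<N. E p q * v q))\<^sup>2) \<le> c\<^sup>2 * (\<Sum>q<N. (cmod (v q))\<^sup>2)"
    and vandermonde: "\<And>\<gamma>. (\<Sum>j<n. (cmod (\<gamma> j))\<^sup>2) \<le> K * (\<Sum>q<N. (cmod (\<Sum>j<n. \<gamma> j * x j ^ q))\<^sup>2)"
    and "K > 0" and amplitudes: "\<And>j. j < n \<Longrightarrow> m \<le> cmod (b j)" and "2 * c * K < m"
  shows "c < sing_val H n"
proof (rule sing_val_gt_if_bounded_below_on_span[OF H assms(2-4), of "\<lambda>j q. cnj (x j ^ q)"])
  fix \<gamma> :: "nat \<Rightarrow> complex" assume "\<exists>j<n. \<gamma> j \<noteq> 0"
  define y where "y = (\<lambda>q. \<Sum>j<n. \<gamma> j * cnj (x j ^ q))"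
  define Sy where "Sy = (\<Sum>q<N. (cmod (y q))\<^sup>2)"
  define Sh where "Sh = (\<Sum>p<N. (cmod (mat_apply H N y p))\<^sup>2)"
  define signal where "signal = (\<lambda>p. \<Sum>j<n. b j * (\<Sum>q<N. x j ^ q * y q) * x j ^ p)"
  define Ey where "Ey = (\<lambda>p. \<Sum>q<N. E p q * y q)"
  have "0 \<le> 2 * c * K" using \<open>0 \<le> c\<close> \<open>K > 0\<close> by simp
  hence "0 \<le> m" using \<open>2 * c * K < m\<close> by linarith
  have frame: "(\<Sum>j<n. (cmod (\<gamma> j))\<^sup>2) \<le> K * Sy"
    unfolding Sy_def y_def using vandermonde \<open>K > 0\<close> \<open>0 \<le> m\<close> amplitudes
    by (rule signal_bounded_below(1))
  have lower: "m\<^sup>2 * Sy \<le> K\<^sup>2 * (\<Sum>p<N. (cmod (signal p))\<^sup>2)"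
    unfolding Sy_def y_def signal_def using vandermonde \<open>K > 0\<close> \<open>0 \<le> m\<close> amplitudes
    by (rule signal_bounded_below(2))
  have "0 < (\<Sum>j<n. (cmod (\<gamma> j))\<^sup>2)"
    using sum_norm_squared_pos \<open>\<exists>j<n. \<gamma> j \<noteq> 0\<close> by blast
  hence "0 < K * Sy" using frame by linarith
  hence "Sy > 0" using \<open>K > 0\<close> by (simp add: zero_less_mult_iff)
  show "c\<^sup>2 * Sy < Sh"
  proof (rule ccontr)
    assume "\<not> c\<^sup>2 * Sy < Sh"
    have "signal p = mat_apply H N y p - Ey p" if "p < N" for p
      using mat_apply_rank_plus_noise[OF entries that, of y] unfolding signal_def Ey_def by simp
    hence "(\<Sum>p<N. (cmod (signal p))\<^sup>2) \<le> 2 * Sh + 2 * (\<Sum>p<N. (cmod (Ey p))\<^sup>2)"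
      unfolding Sh_def using sum_norm_squared_diff_le[of "mat_apply H N y" Ey N] by simp
    also have "\<dots> \<le> 4 * c\<^sup>2 * Sy"
      using noise[of y] \<open>\<not> c\<^sup>2 * Sy < Sh\<close> unfolding Ey_def Sy_def by simp
    finally have "K\<^sup>2 * (\<Sum>p<N. (cmod (signal p))\<^sup>2) \<le> K\<^sup>2 * (4 * c\<^sup>2 * Sy)"
      by (intro mult_left_mono) auto
    hence "m\<^sup>2 * Sy \<le> (2 * c * K)\<^sup>2 * Sy"
      using lower by (simp add: power_mult_distrib mult_ac)
    hence "m\<^sup>2 \<le> (2 * c * K)\<^sup>2" using \<open>Sy > 0\<close> by simp
    moreover have "(2 * c * K)\<^sup>2 < m\<^sup>2"
      using \<open>2 * c * K < m\<close> \<open>0 \<le> c\<close> \<open>K > 0\<close> by (intro power_strict_mono) auto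
    ultimately show False by simp
  qed
qed

section \<open>Equispaced samples of a spike train\<close>

lemma sum_exp_samples_eq_moments:
  fixes \<Omega> :: real and s p q :: nat
  assumes "s > 0"
  shows "(\<Sum>j=1..n. a j * exp (\<i> * of_real (y j * (- \<Omega> + (real (p + q + 1) - 1) / real s * \<Omega>))))
    = (\<Sum>j<n. (a (Suc j) * cis (- (y (Suc j) * \<Omega>))) * cis (y (Suc j) * \<Omega> / real s) ^ p
                * cis (y (Suc j) * \<Omega> / real s) ^ q)"
proof -
  have "exp (\<i> * of_real (u * (- \<Omega> + (real (p + q + 1) - 1) / real s * \<Omega>)))
      = cis (- (u * \<Omega>)) * cis (u * \<Omega> / real s) ^ p * cis (u * \<Omega> / real s) ^ q" for u
  proof -
    have "u * (- \<Omega> + (real (p + q + 1) - 1) / real s * \<Omega>)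
        = - (u * \<Omega>) + real p * (u * \<Omega> / real s) + real q * (u * \<Omega> / real s)"
      using assms by (simp add: field_simps)
    hence "exp (\<i> * of_real (u * (- \<Omega> + (real (p + q + 1) - 1) / real s * \<Omega>)))
        = cis (- (u * \<Omega>) + real p * (u * \<Omega> / real s) + real q * (u * \<Omega> / real s))"
      by (simp add: cis_conv_exp)
    thus ?thesis by (simp add: DeMoivre cis_mult)
  qed
  hence "(\<Sum>j<n. a (Suc j) * exp (\<i> * of_real (y (Suc j) * (- \<Omega> + (real (p + q + 1) - 1) / real s * \<Omega>))))
    = (\<Sum>j<n. (a (Suc j) * cis (- (y (Suc j) * \<Omega>))) * cis (y (Suc j) * \<Omega> / real s) ^ p
                * cis (y (Suc j) * \<Omega> / real s) ^ q)"
    by (intro sum.cong refl) (simp only: mult_ac)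
  moreover have "(\<Sum>j=1..n. a j * exp (\<i> * of_real (y j * (- \<Omega> + (real (p + q + 1) - 1) / real s * \<Omega>))))
    = (\<Sum>j<n. a (Suc j) * exp (\<i> * of_real (y (Suc j) * (- \<Omega> + (real (p + q + 1) - 1) / real s * \<Omega>))))"
    using sum.atLeast1_atMost_eq[of "\<lambda>j. a j * exp (\<i> * of_real (y j * (- \<Omega> + (real (p + q + 1) - 1) / real s * \<Omega>)))" n]
    by simp
  ultimately show ?thesis by simp
qed

lemma abs_diff_scaled:
  fixes u v \<Omega> :: real
  assumes "\<Omega> \<ge> 0"
  shows "\<bar>u * \<Omega> / real s - v * \<Omega> / real s\<bar> = \<Omega> / real s * \<bar>u - v\<bar>"
proof -
  have "u * \<Omega> / real s - v * \<Omega> / real s = \<Omega> / real s * (u - v)"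
    by (simp add: diff_divide_distrib right_diff_distrib mult.commute)
  thus ?thesis using assms by (simp add: abs_mult)
qed

lemma nodes_spread_le_pi:
  fixes y :: "nat \<Rightarrow> real"
  assumes "\<Omega> > 0" "n \<le> s" and range: "\<bar>y i\<bar> \<le> (real n - 1) * pi / (2 * \<Omega>)" "\<bar>y k\<bar> \<le> (real n - 1) * pi / (2 * \<Omega>)"
  shows "\<bar>y i * \<Omega> / real s - y k * \<Omega> / real s\<bar> \<le> pi"
proof (cases "s = 0")
  case False
  have "\<bar>y i - y k\<bar> \<le> (real n - 1) * pi / \<Omega>"
    using range abs_triangle_ineq4[of "y i" "y k"] by (simp add: field_simps)
  hence "\<Omega> / real s * \<bar>y i - y k\<bar> \<le> \<Omega> / real s * ((real n - 1) * pi / \<Omega>)"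
    using \<open>\<Omega> > 0\<close> by (intro mult_left_mono) auto
  also have "\<dots> = (real n - 1) / real s * pi" using \<open>\<Omega> > 0\<close> by simp
  also have "\<dots> \<le> 1 * pi" using \<open>n \<le> s\<close> False by (intro mult_right_mono) (auto simp: field_simps)
  finally show ?thesis by (simp only: abs_diff_scaled[OF less_imp_le[OF \<open>\<Omega> > 0\<close>]] mult_1_left)
qed simp

text \<open>\<open>real n * ((pi / \<delta>) ^ (n - 1) / \<zeta>)\<^sup>2\<close> is the constant of \<open>vandermonde_inverse_bound\<close>.\<close>
lemma vandermonde_constant_lt:
  fixes n :: nat and c m \<zeta> \<delta> :: real
  assumes "n \<ge> 2" "\<zeta> > 0" "m > 0" "c > 0"
    and sep: "pi * (2 * real n * c / (\<zeta>\<^sup>2 * m)) powr (1 / (2 * real n - 2)) < \<delta>"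
  shows "2 * c * (real n * ((pi / \<delta>) ^ (n - 1) / \<zeta>)\<^sup>2) < m"
proof -
  define X where "X = 2 * real n * c / (\<zeta>\<^sup>2 * m)"
  define k where "k = 2 * (n - 1)"
  have X: "X > 0" unfolding X_def using assms by simp
  have "0 \<le> pi * X powr (1 / (2 * real n - 2))" by simp
  hence "\<delta> > 0" using sep unfolding X_def by linarith
  have "(X powr (1 / (2 * real n - 2))) ^ k = X"
    using X \<open>n \<ge> 2\<close> unfolding k_def by (simp add: powr_realpow[symmetric] powr_powr of_nat_diff)
  moreover have "(X powr (1 / (2 * real n - 2))) ^ k < (\<delta> / pi) ^ k"
    using sep \<open>n \<ge> 2\<close> unfolding k_def X_def by (intro power_strict_mono) (auto simp: field_simps)
  ultimately have "X < (\<delta> / pi) ^ k" by simp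
  define A where "A = (pi / \<delta>) ^ (n - 1)"
  define B where "B = (\<delta> / pi) ^ k"
  have "A\<^sup>2 = (pi / \<delta>) ^ k"
    unfolding A_def k_def power_mult[symmetric] by (simp only: mult.commute)
  also have "\<dots> = 1 / B" unfolding B_def by (simp add: power_divide)
  finally have "A\<^sup>2 = 1 / B" .
  hence "real n * (A / \<zeta>)\<^sup>2 = real n / (\<zeta>\<^sup>2 * B)" by (simp add: power_divide)
  hence "real n * ((pi / \<delta>) ^ (n - 1) / \<zeta>)\<^sup>2 = real n / (\<zeta>\<^sup>2 * (\<delta> / pi) ^ k)"
    unfolding A_def B_def .
  also have "\<dots> < real n / (\<zeta>\<^sup>2 * X)"
    using \<open>X < (\<delta> / pi) ^ k\<close> X \<open>\<zeta> > 0\<close> \<open>n \<ge> 2\<close>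
    by (intro divide_strict_left_mono mult_strict_left_mono) auto
  also have "real n / (\<zeta>\<^sup>2 * X) = m / (2 * c)"
    unfolding X_def using assms by (simp add: field_simps)
  finally show ?thesis using \<open>c > 0\<close> by (simp add: field_simps)
qed

lemma scaled_min_dist_le:
  fixes y :: "nat \<Rightarrow> real"
  assumes "\<Omega> \<ge> 0" "i < n" "k < n" "i \<noteq> k"
  shows "\<Omega> / real s * Min {\<bar>y p - y j\<bar> | p j. p \<in> {1..n} \<and> j \<in> {1..n} \<and> p \<noteq> j}
    \<le> \<bar>y (Suc i) * \<Omega> / real s - y (Suc k) * \<Omega> / real s\<bar>"
proof -
  define D where "D = {\<bar>y p - y j\<bar> | p j. p \<in> {1..n} \<and> j \<in> {1..n} \<and> p \<noteq> j}"
  have "D \<subseteq> {\<bar>y p - y j\<bar> | p j. p \<in> {1..n} \<and> j \<in> {1..n}}" unfolding D_def by blast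
  hence "finite D" by (rule finite_subset) (rule finite_image_set2; simp)
  moreover have "\<bar>y (Suc i) - y (Suc k)\<bar> \<in> D"
    unfolding D_def using assms(2-4) by force
  ultimately have "Min D \<le> \<bar>y (Suc i) - y (Suc k)\<bar>" by (rule Min_le)
  thus ?thesis
    unfolding D_def[symmetric] abs_diff_scaled[OF \<open>\<Omega> \<ge> 0\<close>] using \<open>\<Omega> \<ge> 0\<close> by (intro mult_left_mono) auto
qed

lemma sing_val_gt_of_separated_nodes:
  fixes H :: "complex mat" and b :: "nat \<Rightarrow> complex" and th :: "nat \<Rightarrow> real"
    and E :: "nat \<Rightarrow> nat \<Rightarrow> complex"
  assumes H: "H \<in> carrier_mat N N" and "2 \<le> n" "n \<le> N" "c > 0" "m > 0"
    and entries: "\<And>p q. p < N \<Longrightarrow> q < N \<Longrightarrow>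
      H $$ (p, q) = (\<Sum>j<n. b j * cis (th j) ^ p * cis (th j) ^ q) + E p q"
    and noise: "\<And>v. (\<Sum>p<N. (cmod (\<Sum>q<N. E p q * v q))\<^sup>2) \<le> c\<^sup>2 * (\<Sum>q<N. (cmod (v q))\<^sup>2)"
    and gap: "\<And>i k. i < n \<Longrightarrow> k < n \<Longrightarrow> i \<noteq> k \<Longrightarrow> \<delta> \<le> \<bar>th i - th k\<bar>"
    and spread: "\<And>i k. i < n \<Longrightarrow> k < n \<Longrightarrow> \<bar>th i - th k\<bar> \<le> pi"
    and amplitudes: "\<And>j. j < n \<Longrightarrow> m \<le> cmod (b j)"
    and sep: "pi * (2 * real n * c / ((zeta_fn n)\<^sup>2 * m)) powr (1 / (2 * real n - 2)) < \<delta>"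
  shows "c < sing_val H n"
proof -
  have "0 \<le> pi * (2 * real n * c / ((zeta_fn n)\<^sup>2 * m)) powr (1 / (2 * real n - 2))" by simp
  hence "\<delta> > 0" using sep by linarith
  hence "real n * ((pi / \<delta>) ^ (n - 1) / zeta_fn n)\<^sup>2 > 0"
    using \<open>2 \<le> n\<close> zeta_fn_pos[of n] by simp
  thus ?thesis
    using sing_val_gt_of_rank_plus_noise[OF H _ _ \<open>n \<le> N\<close> entries noise
        vandermonde_inverse_bound[OF \<open>n \<le> N\<close> \<open>\<delta> > 0\<close> gap spread] _ amplitudes
        vandermonde_constant_lt[OF \<open>2 \<le> n\<close> zeta_fn_pos \<open>m > 0\<close> \<open>c > 0\<close> sep]]
      \<open>c > 0\<close> \<open>2 \<le> n\<close> by auto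
qed

theorem theorem5p1:
  fixes n s :: nat and \<Omega> \<sigma> :: real
    and a :: "nat \<Rightarrow> complex" and y :: "nat \<Rightarrow> real" and W :: "nat \<Rightarrow> complex"
    and z :: "nat \<Rightarrow> real" and Y :: "nat \<Rightarrow> complex" and H :: "complex mat"
  defines "m_min \<equiv> Min ((\<lambda>j. cmod (a j)) ` {1..n})"
  defines "z \<equiv> (\<lambda>t. - \<Omega> + (real t - 1) / real s * \<Omega>)"
  defines "Y \<equiv> (\<lambda>t. (\<Sum>j=1..n. a j * exp (\<i> * of_real (y j * z t))) + W t)"
  defines "H \<equiv> mat (s + 1) (s + 1) (\<lambda>(p, q). Y (p + q + 1))"
  assumes n2: "n \<ge> 2" and sn: "s \<ge> n" and \<Omega>pos: "\<Omega> > 0"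
    and \<sigma>pos: "0 < \<sigma>" and \<sigma>m: "\<sigma> < m_min"
    and ydist: "inj_on y {1..n}"
    and yrange: "\<And>j. j \<in> {1..n} \<Longrightarrow> \<bar>y j\<bar> \<le> (real n - 1) * pi / (2 * \<Omega>)"
    and noise: "\<And>t. t \<in> {1..2*s+1} \<Longrightarrow> cmod (W t) \<le> \<sigma>"
  shows "(\<forall>j \<in> {n+1..s+1}. sing_val H j \<le> (real s + 1) * \<sigma>)
     \<and> (Min {\<bar>y p - y j\<bar> | p j. p \<in> {1..n} \<and> j \<in> {1..n} \<and> p \<noteq> j}
          > pi * real s / \<Omega> *
            ((2 * real n * (real s + 1) / (zeta_fn n)^2) * (\<sigma> / m_min)) powr (1 / (2 * real n - 2))
        \<longrightarrow> sing_val H n > (real s + 1) * \<sigma>)"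
proof -
  have "s > 0" using n2 sn by simp
  define N where "N = s + 1"
  define th where "th = (\<lambda>j. y (Suc j) * \<Omega> / real s)"
  define b where "b = (\<lambda>j. a (Suc j) * cis (- (y (Suc j) * \<Omega>)))"
  define E where "E = (\<lambda>p q. W (p + q + 1))"
  define c where "c = (real s + 1) * \<sigma>"
  have H: "H \<in> carrier_mat N N" unfolding H_def N_def by simp
  have entries: "H $$ (p, q) = (\<Sum>j<n. b j * cis (th j) ^ p * cis (th j) ^ q) + E p q"
    if "p < N" "q < N" for p q
    using that sum_exp_samples_eq_moments[OF \<open>s > 0\<close>, where a = a and y = y and n = n and p = p and q = q]
    unfolding H_def N_def Y_def z_def b_def th_def E_def by simp
  have noise_bound: "(\<Sum>p<N. (cmod (\<Sum>q<N. E p q * v q))\<^sup>2) \<le> c\<^sup>2 * (\<Sum>q<N. (cmod (v q))\<^sup>2)" for v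
    unfolding N_def E_def c_def by (rule hankel_noise_bound[OF noise])
  have "c > 0" unfolding c_def using \<sigma>pos by simp
  have "\<forall>j\<in>{n+1..s+1}. sing_val H j \<le> c"
    using sing_val_le_of_rank_plus_noise[OF H _ _ _ entries noise_bound] \<open>c > 0\<close> unfolding N_def by auto
  moreover have "c < sing_val H n"
    if "Min {\<bar>y p - y j\<bar> | p j. p \<in> {1..n} \<and> j \<in> {1..n} \<and> p \<noteq> j}
          > pi * real s / \<Omega> *
            ((2 * real n * (real s + 1) / (zeta_fn n)^2) * (\<sigma> / m_min)) powr (1 / (2 * real n - 2))"
  proof (rule sing_val_gt_of_separated_nodes[OF H n2 _ \<open>c > 0\<close> _ entries noise_bound])
    show "\<Omega> / real s * Min {\<bar>y p - y j\<bar> | p j. p \<in> {1..n} \<and> j \<in> {1..n} \<and> p \<noteq> j}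
      \<le> \<bar>th i - th k\<bar>" if "i < n" "k < n" "i \<noteq> k" for i k
      unfolding th_def using \<Omega>pos that by (intro scaled_min_dist_le) auto
    show "\<bar>th i - th k\<bar> \<le> pi" if "i < n" "k < n" for i k
      unfolding th_def using that by (intro nodes_spread_le_pi[OF \<Omega>pos sn] yrange) auto
    show "m_min \<le> cmod (b j)" if "j < n" for j
      using that unfolding m_min_def b_def by (auto simp: norm_mult intro!: Min_le)
    show "pi * (2 * real n * c / ((zeta_fn n)\<^sup>2 * m_min)) powr (1 / (2 * real n - 2))
      < \<Omega> / real s * Min {\<bar>y p - y j\<bar> | p j. p \<in> {1..n} \<and> j \<in> {1..n} \<and> p \<noteq> j}"
      using that \<Omega>pos \<open>s > 0\<close> unfolding c_def by (simp add: field_simps)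
  qed (use \<sigma>pos \<sigma>m sn in \<open>auto simp: N_def\<close>)
  ultimately show ?thesis unfolding c_def by blast
qed

end
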